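(* For every $m\in\mathbb{N}$ and $\alpha\in\mathcal{C}_m$, the matrix $W_\alpha$ is congruent to $\Gamma_2\oplus\mathrm{H}_2(-1)^{\oplus (m-2)/2}$ if all $\alpha_i$ are even, and to $1\oplus\mathrm{H}_2(-1)^{\oplus\frac12(m-\#^{\mathsf{odd}}_\alpha)}\oplus 0^{\oplus(\#^{\mathsf{odd}}_\alpha-1)}$ otherwise.
   Context: $\mathcal{C}_m$ is the set of compositions of $m$ (tuples $\alpha=(\alpha_1,\dots,\alpha_N)$ of positive integers summing to $m$); $\#^{\mathsf{odd}}_\alpha$ is the number of odd entries. Let $E^j:[0,1]\to\mathbb{R}^m$, $t\mapsto te_j$; concatenation $(X\star Y)(t)=X(2t)$ for $t<\frac12$, $X(1)+Y(2t-1)$ for $t\ge\frac12$; $\mathsf{Ax}^{\alpha,i}=E^{\alpha_1+\dots+\alpha_{i-1}+1}\star\dots\star E^{\alpha_1+\dots+\alpha_i}$. $\sigma(X)=1\oplus(X(1)-X(0))\oplus\big(\int_{0<t_1<t_2<1}\dot X_a(t_1)\dot X_b(t_2)dt_1dt_2\big)_{a,b}$ is the $2$-truncated signature, in the free nilpotent Lie group $\mathcal{G}_{m,2}=\exp(\mathfrak{g}_{m,2})\subset T_{m,2}=\mathbb{R}\oplus\mathbb{R}^m\oplus\mathbb{R}^{m\times m}$ (truncated tensor product, $\exp(\mathbf{z})=1+\mathbf{z}+\mathbf{z}^{\otimes2}/2$, $\log=\exp^{-1}$). The barycenter of $\mathbf{x}\in\mathcal{G}_{m,2}^N$ is the unique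 $\mathbf{m}$ with $\sum_i\log(\mathbf{m}^{-1}\mathbf{x}_i)=0$, and $W_\alpha\in\mathbb{R}^{m\times m}$ is the level-2 component of $\mathsf{bary}(\sigma(\mathsf{Ax}^{\alpha,1}),\dots,\sigma(\mathsf{Ax}^{\alpha,N}))$. $\Gamma_2=\begin{bmatrix}0&-1\\1&1\end{bmatrix}$, $\mathrm{H}_2(-1)=\begin{bmatrix}0&1\\-1&0\end{bmatrix}$, $\oplus$ is block diagonal sum, $M^{\oplus n}$ the $n$-fold sum, $0^{\oplus n}$ the $n\times n$ zero matrix. Real matrices $M,V$ are congruent if $PMP^\top=V$ for some invertible real $P$. *)

theory Defs
  imports "HOL-Analysis.Analysis" "Jordan_Normal_Form.Matrix"
begin

section \<open>Truncated tensor algebra T_{m,2} = R + R^m + R^{m x m}\<close>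

type_synonym tens = "real \<times> real Matrix.vec \<times> real Matrix.mat"

definition outer :: "nat \<Rightarrow> real Matrix.vec \<Rightarrow> real Matrix.vec \<Rightarrow> real Matrix.mat" where
  "outer m v w = Matrix.mat m m (\<lambda>(i,j). v $ i * w $ j)"

definition tmult :: "nat \<Rightarrow> tens \<Rightarrow> tens \<Rightarrow> tens" where
  "tmult m x y = (case x of (a, v, A) \<Rightarrow> case y of (b, w, B) \<Rightarrow>
     (a * b, a \<cdot>\<^sub>v w + b \<cdot>\<^sub>v v, a \<cdot>\<^sub>m B + b \<cdot>\<^sub>m A + outer m v w))"

definition tadd :: "tens \<Rightarrow> tens \<Rightarrow> tens" where
  "tadd x y = (case x of (a, v, A) \<Rightarrow> case y of (b, w, B) \<Rightarrow> (a + b, v + w, A + B))"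

definition tzero :: "nat \<Rightarrow> tens" where
  "tzero m = (0, 0\<^sub>v m, 0\<^sub>m m m)"

definition tone :: "nat \<Rightarrow> tens" where
  "tone m = (1, 0\<^sub>v m, 0\<^sub>m m m)"

definition tsum :: "nat \<Rightarrow> tens list \<Rightarrow> tens" where
  "tsum m xs = foldr tadd xs (tzero m)"

text \<open>exp(z) = 1 + z + z^2/2 and log(x) = (x-1) - (x-1)^2/2 in the truncated algebra
  (evaluated for elements with the appropriate scalar part).\<close>
definition texp :: "nat \<Rightarrow> tens \<Rightarrow> tens" where
  "texp m z = tadd (tadd (tone m) z) (case tmult m z z of (c, u, C) \<Rightarrow> (c/2, (1/2) \<cdot>\<^sub>v u, (1/2) \<cdot>\<^sub>m C))"

definition tlog :: "nat \<Rightarrow> tens \<Rightarrow> tens" where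
  "tlog m x = (let y = tadd x (case tone m of (c, u, C) \<Rightarrow> (-c, -u, -C)) in
     tadd y (case tmult m y y of (c, u, C) \<Rightarrow> (-c/2, (-1/2) \<cdot>\<^sub>v u, (-1/2) \<cdot>\<^sub>m C)))"

definition tlie :: "nat \<Rightarrow> tens set" where
  "tlie m = {(0, v, A) | v A. v \<in> carrier_vec m \<and> A \<in> carrier_mat m m \<and> transpose_mat A = - A}"

definition tgroup :: "nat \<Rightarrow> tens set" where
  "tgroup m = texp m ` tlie m"

definition tinv :: "nat \<Rightarrow> tens \<Rightarrow> tens" where
  "tinv m x = (THE y. y \<in> tgroup m \<and> tmult m x y = tone m)"

definition bary :: "nat \<Rightarrow> tens list \<Rightarrow> tens" where
  "bary m xs = (THE g. g \<in> tgroup m \<and> tsum m (map (\<lambda>x. tlog m (tmult m (tinv m g) x)) xs) = tzero m)"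

text \<open>Paths [0,1] -> R^m, coordinates indexed 1..m (coordinate k of X t is X t k).\<close>
type_synonym path = "real \<Rightarrow> nat \<Rightarrow> real"

definition sig2 :: "nat \<Rightarrow> path \<Rightarrow> tens" where
  "sig2 m X = (1, Matrix.vec m (\<lambda>i. X 1 (Suc i) - X 0 (Suc i)),
     Matrix.mat m m (\<lambda>(a, b). integral {(s, t). 0 < s \<and> s < t \<and> t < 1}
        (\<lambda>(s, t). vector_derivative (\<lambda>r. X r (Suc a)) (at s) *
                  vector_derivative (\<lambda>r. X r (Suc b)) (at t))))"

definition axis :: "nat \<Rightarrow> path" where
  "axis j = (\<lambda>t k. if k = j then t else 0)"

definition pcat :: "path \<Rightarrow> path \<Rightarrow> path" where
  "pcat X Y = (\<lambda>t. if t < 1/2 then X (2 * t) else (\<lambda>k. X 1 k + Y (2 * t - 1) k))"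

fun pconcat :: "path list \<Rightarrow> path" where
  "pconcat [] = (\<lambda>t k. 0)"
| "pconcat [X] = X"
| "pconcat (X # Xs) = pcat X (pconcat Xs)"

text \<open>Ax^{alpha,i} for 1 <= i <= N (alpha given as a list, alpha_i = alpha ! (i-1)).\<close>
definition Ax :: "nat list \<Rightarrow> nat \<Rightarrow> path" where
  "Ax \<alpha> i = (let s = sum_list (take (i - 1) \<alpha>) in
     pconcat (map axis [s + 1 ..< s + \<alpha> ! (i - 1) + 1]))"

definition W :: "nat list \<Rightarrow> real Matrix.mat" where
  "W \<alpha> = snd (snd (bary (sum_list \<alpha>) (map (\<lambda>i. sig2 (sum_list \<alpha>) (Ax \<alpha> i)) [1 ..< length \<alpha> + 1])))"

definition nodd :: "nat list \<Rightarrow> nat" where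
  "nodd \<alpha> = length (filter odd \<alpha>)"

definition dsum :: "real Matrix.mat \<Rightarrow> real Matrix.mat \<Rightarrow> real Matrix.mat" where
  "dsum A B = four_block_mat A (0\<^sub>m (dim_row A) (dim_col B)) (0\<^sub>m (dim_row B) (dim_col A)) B"

fun dpow :: "real Matrix.mat \<Rightarrow> nat \<Rightarrow> real Matrix.mat" where
  "dpow A 0 = 0\<^sub>m 0 0"
| "dpow A (Suc n) = dsum A (dpow A n)"

definition Gamma2 :: "real Matrix.mat" where
  "Gamma2 = mat_of_rows_list 2 [[0, -1], [1, 1]]"

definition H2m :: "real Matrix.mat" where
  "H2m = mat_of_rows_list 2 [[0, 1], [-1, 0]]"

definition congruent :: "real Matrix.mat \<Rightarrow> real Matrix.mat \<Rightarrow> bool" where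
  "congruent M V \<longleftrightarrow> (\<exists>n P. M \<in> carrier_mat n n \<and> V \<in> carrier_mat n n \<and> P \<in> carrier_mat n n \<and>
      invertible_mat P \<and> P * M * transpose_mat P = V)"

end

(* The signature of Ax^{alpha,i} is (1, v_i, S_i), where v_i is the indicator vector of the i-th block
   of coordinates and S_i is 1 above and 1/2 on the diagonal of that block. Solving the barycenter
   equations in G_{m,2} gives W_alpha = (K_alpha + J/N) / (2N), where N is the number of parts, J the
   all-ones matrix and K_alpha the block diagonal sum, over the parts k of alpha, of the k x k matrices
   with 1 above and -1 below the diagonal. Up to a positive factor, W_alpha is thus congruent to
   K_alpha + c^2 J. Explicit changes of basis split off H_2(-1) from a part of size at least 3 (which
   shrinks by 2) or from two adjacent parts of sizes (2,1) or (2,2), and a zero block from two parts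
   of size 1, each time leaving a form of the same shape for a smaller composition; the one-part
   forms for [1] and [2] are congruent to 1 and Gamma_2. *)

theory Submission
  imports Defs "Jordan_Normal_Form.Determinant"
begin

section \<open>Block sums and congruence\<close>

lemma dsum_carrier_mat [simp]:
  "A \<in> carrier_mat a a \<Longrightarrow> B \<in> carrier_mat b b \<Longrightarrow> dsum A B \<in> carrier_mat (a + b) (a + b)"
  unfolding dsum_def by auto

lemma dim_dsum [simp]:
  "dim_row (dsum A B) = dim_row A + dim_row B" "dim_col (dsum A B) = dim_col A + dim_col B"
  unfolding dsum_def by auto

lemma index_dsum:
  assumes "A \<in> carrier_mat a a" "B \<in> carrier_mat b b" "i < a + b" "j < a + b"
  shows "dsum A B $$ (i, j) =
    (if i < a then (if j < a then A $$ (i, j) else 0) else (if j < a then 0 else B $$ (i - a, j - a)))"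
  using assms unfolding dsum_def by auto

lemma dsum_assoc:
  assumes "A \<in> carrier_mat a a" "B \<in> carrier_mat b b" "C \<in> carrier_mat c c"
  shows "dsum (dsum A B) C = dsum A (dsum B C)"
  by (rule eq_matI)
    (use assms in \<open>auto simp: index_dsum[of _ "a + b" _ c] index_dsum[of _ a _ "b + c"]
       index_dsum[of _ a _ b] index_dsum[of _ b _ c]\<close>)

lemma dsum_empty_left [simp]: "dsum (0\<^sub>m 0 0) A = A"
  by (rule eq_matI) (auto simp: dsum_def)

lemma dsum_empty_right [simp]: "dsum A (0\<^sub>m 0 0) = A"
  by (rule eq_matI) (auto simp: dsum_def)

lemma dsum_zero_mat: "dsum (0\<^sub>m a a) (0\<^sub>m b b) = 0\<^sub>m (a + b) (a + b)"
  unfolding dsum_def by simp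

lemma dsum_mult:
  assumes "A \<in> carrier_mat a a" "B \<in> carrier_mat b b" "C \<in> carrier_mat a a" "D \<in> carrier_mat b b"
  shows "dsum A B * dsum C D = dsum (A * C) (B * D)"
  unfolding dsum_def using assms by (subst mult_four_block_mat[of _ a a _ b _ b]) auto

lemma transpose_dsum:
  assumes "A \<in> carrier_mat a a" "B \<in> carrier_mat b b"
  shows "transpose_mat (dsum A B) = dsum (transpose_mat A) (transpose_mat B)"
  by (rule eq_matI) (use assms in \<open>auto simp: index_dsum\<close>)

lemma det_dsum:
  assumes "A \<in> carrier_mat a a" "B \<in> carrier_mat b b"
  shows "Determinant.det (dsum A B) = Determinant.det A * Determinant.det B"
  unfolding dsum_def using assms by (intro det_four_block_mat_upper_right_zero) auto

lemma H2m_carrier [simp]: "H2m \<in> carrier_mat 2 2"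
  unfolding H2m_def by (auto simp: mat_of_rows_list_def)

lemma Gamma2_carrier [simp]: "Gamma2 \<in> carrier_mat 2 2"
  unfolding Gamma2_def by (auto simp: mat_of_rows_list_def)

lemma dpow_carrier [simp]: "A \<in> carrier_mat a a \<Longrightarrow> dpow A r \<in> carrier_mat (a * r) (a * r)"
  by (induction r) auto

lemma invertible_mat_iff_det:
  fixes P :: "real mat"
  assumes P: "P \<in> carrier_mat n n"
  shows "invertible_mat P \<longleftrightarrow> Determinant.det P \<noteq> 0"
proof
  assume "invertible_mat P"
  then obtain Q where PQ: "P * Q = 1\<^sub>m n" and QP: "Q * P = 1\<^sub>m (dim_row Q)"
    using P unfolding invertible_mat_def inverts_mat_def by auto
  have "Q \<in> carrier_mat n n"
    using arg_cong[OF PQ, of dim_col] arg_cong[OF QP, of dim_col] P by auto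
  then show "Determinant.det P \<noteq> 0"
    using arg_cong[OF PQ, of Determinant.det] det_mult[OF P] by auto
next
  assume "Determinant.det P \<noteq> 0"
  from det_non_zero_imp_unit[OF P this, of undefined] P show "invertible_mat P"
    unfolding Units_def ring_mat_def invertible_mat_def inverts_mat_def by auto
qed

lemma invertible_mat_mult:
  fixes P Q :: "real mat"
  assumes "P \<in> carrier_mat n n" "Q \<in> carrier_mat n n" "invertible_mat P" "invertible_mat Q"
  shows "invertible_mat (P * Q)"
  using assms by (simp add: invertible_mat_iff_det[of _ n] det_mult[of _ n])

lemma invertible_mat_dsum:
  fixes P Q :: "real mat"
  assumes "P \<in> carrier_mat a a" "Q \<in> carrier_mat b b" "invertible_mat P" "invertible_mat Q"
  shows "invertible_mat (dsum P Q)"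
  using assms by (simp add: invertible_mat_iff_det[of _ "a + b"] invertible_mat_iff_det[of _ a]
      invertible_mat_iff_det[of _ b] det_dsum)

lemma invertible_mat_one: "invertible_mat (1\<^sub>m n :: real mat)"
  by (simp add: invertible_mat_iff_det[of _ n])

lemma invertible_mat_right_inverse:
  fixes P R :: "real mat"
  assumes "P \<in> carrier_mat n n" "R \<in> carrier_mat n n" "P * R = 1\<^sub>m n"
  shows "invertible_mat P"
proof -
  have "Determinant.det P * Determinant.det R = 1"
    using arg_cong[OF assms(3), of Determinant.det] det_mult[OF assms(1,2)] by simp
  then show ?thesis using assms(1) by (auto simp: invertible_mat_iff_det)
qed

lemma congruentI:
  assumes "M \<in> carrier_mat n n" "P \<in> carrier_mat n n" "invertible_mat P" "P * M * transpose_mat P = V"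
  shows "congruent M V"
  unfolding congruent_def using assms by (intro exI[of _ n] exI[of _ P]) auto

lemma congruent_refl: "M \<in> carrier_mat n n \<Longrightarrow> congruent M M"
  by (rule congruentI[of _ n "1\<^sub>m n"]) (auto simp: invertible_mat_one)

lemma congruent_trans [trans]:
  assumes "congruent A B" "congruent B C"
  shows "congruent A C"
proof -
  obtain n P where A: "A \<in> carrier_mat n n" and P: "P \<in> carrier_mat n n" "invertible_mat P"
    and B: "P * A * transpose_mat P = B"
    using assms(1) unfolding congruent_def by auto
  obtain R where R: "R \<in> carrier_mat n n" "invertible_mat R" and C: "R * B * transpose_mat R = C"
    using assms(2) A B P unfolding congruent_def by auto
  have "(R * P) * A * transpose_mat (R * P) = R * (P * A * transpose_mat P) * transpose_mat R"
    using A P R by (simp add: transpose_mult[of _ n n _ n] assoc_mult_mat[of _ n n _ n _ n])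
  then show ?thesis
    using A P R B C by (intro congruentI[of _ n "R * P"]) (auto intro: invertible_mat_mult)
qed

lemma congruent_dsum:
  assumes "congruent A A'" "congruent B B'"
  shows "congruent (dsum A B) (dsum A' B')"
proof -
  obtain a P where A: "A \<in> carrier_mat a a" and P: "P \<in> carrier_mat a a" "invertible_mat P"
    and A': "P * A * transpose_mat P = A'"
    using assms(1) unfolding congruent_def by auto
  obtain b R where B: "B \<in> carrier_mat b b" and R: "R \<in> carrier_mat b b" "invertible_mat R"
    and B': "R * B * transpose_mat R = B'"
    using assms(2) unfolding congruent_def by auto
  have "dsum P R * dsum A B * transpose_mat (dsum P R) = dsum A' B'"
    using A B P R A' B' transpose_dsum[of P a R b] dsum_mult[of P a R b A B]
      dsum_mult[of "P * A" a "R * B" b "transpose_mat P" "transpose_mat R"] by simp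
  then show ?thesis
    using A B P R by (intro congruentI[of _ "a + b" "dsum P R"]) (auto simp: invertible_mat_dsum)
qed

lemma congruent_dsum_left:
  "congruent A A' \<Longrightarrow> B \<in> carrier_mat b b \<Longrightarrow> congruent (dsum B A) (dsum B A')"
  using congruent_dsum congruent_refl by blast

lemma congruent_smult:
  fixes M :: "real mat"
  assumes M: "M \<in> carrier_mat n n" and d: "d \<noteq> 0"
  shows "congruent M ((d * d) \<cdot>\<^sub>m M)"
proof -
  let ?P = "d \<cdot>\<^sub>m 1\<^sub>m n"
  have "?P * M = d \<cdot>\<^sub>m M" "transpose_mat ?P = ?P"
    using M by (auto simp: mult_smult_assoc_mat[of _ n n _ n] intro!: eq_matI)
  moreover have "d \<cdot>\<^sub>m M * ?P = (d * d) \<cdot>\<^sub>m M"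
    using M by (auto simp: mult_smult_distrib[of _ n n _ n] intro!: eq_matI)
  moreover have "invertible_mat ?P" using d by (simp add: invertible_mat_iff_det[of _ n])
  ultimately show ?thesis by (intro congruentI[OF M, of ?P]) auto
qed

definition swap_mat :: "nat \<Rightarrow> nat \<Rightarrow> real mat" where
  "swap_mat a b = four_block_mat (0\<^sub>m b a) (1\<^sub>m b) (1\<^sub>m a) (0\<^sub>m a b)"

lemma swap_mat_carrier [simp]: "swap_mat a b \<in> carrier_mat (a + b) (a + b)"
  unfolding swap_mat_def by (metis add.commute four_block_carrier_mat one_carrier_mat zero_carrier_mat)

lemma transpose_swap_mat: "transpose_mat (swap_mat a b) = swap_mat b a"
  unfolding swap_mat_def by (rule eq_matI) auto

lemma swap_mat_conj:
  assumes A: "A \<in> carrier_mat a a" and B: "B \<in> carrier_mat b b"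
  shows "swap_mat a b * dsum A B * transpose_mat (swap_mat a b) = dsum B A"
proof -
  have AB: "dsum A B = four_block_mat A (0\<^sub>m a b) (0\<^sub>m b a) B"
    and BA: "dsum B A = four_block_mat B (0\<^sub>m b a) (0\<^sub>m a b) A"
    unfolding dsum_def using A B by auto
  have "swap_mat a b * dsum A B = four_block_mat (0\<^sub>m b a * A + 1\<^sub>m b * 0\<^sub>m b a)
      (0\<^sub>m b a * 0\<^sub>m a b + 1\<^sub>m b * B) (1\<^sub>m a * A + 0\<^sub>m a b * 0\<^sub>m b a) (1\<^sub>m a * 0\<^sub>m a b + 0\<^sub>m a b * B)"
    unfolding swap_mat_def AB by (rule mult_four_block_mat[of _ b a _ b _ a _ _ a _ b]) (use A B in auto)
  also have "\<dots> = four_block_mat (0\<^sub>m b a) B A (0\<^sub>m a b)" using A B by simp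
  finally have left: "swap_mat a b * dsum A B = four_block_mat (0\<^sub>m b a) B A (0\<^sub>m a b)" .
  have "four_block_mat (0\<^sub>m b a) B A (0\<^sub>m a b) * swap_mat b a = four_block_mat
      (0\<^sub>m b a * 0\<^sub>m a b + B * 1\<^sub>m b) (0\<^sub>m b a * 1\<^sub>m a + B * 0\<^sub>m b a)
      (A * 0\<^sub>m a b + 0\<^sub>m a b * 1\<^sub>m b) (A * 1\<^sub>m a + 0\<^sub>m a b * 0\<^sub>m b a)"
    unfolding swap_mat_def by (rule mult_four_block_mat[of _ b a _ b _ a _ _ b _ a]) (use A B in auto)
  also have "\<dots> = dsum B A" unfolding BA using A B by simp
  finally show ?thesis unfolding left transpose_swap_mat .
qed

lemma invertible_swap_mat: "invertible_mat (swap_mat a b)"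
proof (rule invertible_mat_right_inverse)
  have "swap_mat a b * swap_mat b a = four_block_mat (0\<^sub>m b a * 0\<^sub>m a b + 1\<^sub>m b * 1\<^sub>m b)
      (0\<^sub>m b a * 1\<^sub>m a + 1\<^sub>m b * 0\<^sub>m b a) (1\<^sub>m a * 0\<^sub>m a b + 0\<^sub>m a b * 1\<^sub>m b) (1\<^sub>m a * 1\<^sub>m a + 0\<^sub>m a b * 0\<^sub>m b a)"
    unfolding swap_mat_def by (rule mult_four_block_mat[of _ b a _ b _ a _ _ b _ a]) auto
  also have "\<dots> = 1\<^sub>m (a + b)" by (simp add: add.commute)
  finally show "swap_mat a b * swap_mat b a = 1\<^sub>m (a + b)" .
  show "swap_mat b a \<in> carrier_mat (a + b) (a + b)"
    using swap_mat_carrier[of b a] by (simp add: add.commute)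
qed simp

lemma congruent_dsum_commute:
  assumes "A \<in> carrier_mat a a" "B \<in> carrier_mat b b"
  shows "congruent (dsum A B) (dsum B A)"
  using assms by (intro congruentI[of _ "a + b" "swap_mat a b"])
    (auto simp: swap_mat_conj invertible_swap_mat)

section \<open>Normal form of skew block matrices plus a constant rank-one form\<close>

lemma outer_carrier [simp]: "outer n u v \<in> carrier_mat n n"
  unfolding outer_def by auto

lemma dim_outer [simp]: "dim_row (outer n u v) = n" "dim_col (outer n u v) = n"
  unfolding outer_def by auto

lemma index_outer [simp]: "i < n \<Longrightarrow> j < n \<Longrightarrow> outer n u v $$ (i, j) = u $ i * v $ j"
  unfolding outer_def by auto

lemma outer_conj:
  assumes P: "P \<in> carrier_mat n n" and u: "u \<in> carrier_vec n"
  shows "P * outer n u u * transpose_mat P = outer n (P *\<^sub>v u) (P *\<^sub>v u)"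
proof (rule eq_matI)
  fix i j assume "i < dim_row (outer n (P *\<^sub>v u) (P *\<^sub>v u))" "j < dim_col (outer n (P *\<^sub>v u) (P *\<^sub>v u))"
  then have i: "i < n" and j: "j < n" by simp_all
  have row: "(P * outer n u u) $$ (i, k) = (P *\<^sub>v u) $ i * u $ k" if "k < n" for k
    using P u i that by (auto simp: scalar_prod_def sum_distrib_right mult.assoc)
  have "(P * outer n u u * transpose_mat P) $$ (i, j) = (\<Sum>k<n. (P *\<^sub>v u) $ i * u $ k * P $$ (j, k))"
    using P i j row by (auto simp: scalar_prod_def lessThan_atLeast0)
  also have "\<dots> = (P *\<^sub>v u) $ i * (P *\<^sub>v u) $ j"
    using P u j by (auto simp: scalar_prod_def sum_distrib_left lessThan_atLeast0 mult_ac)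
  finally show "(P * outer n u u * transpose_mat P) $$ (i, j) = outer n (P *\<^sub>v u) (P *\<^sub>v u) $$ (i, j)"
    using i j by simp
qed (use P in auto)

lemma conj_add_outer:
  assumes P: "P \<in> carrier_mat n n" and A: "A \<in> carrier_mat n n" and u: "u \<in> carrier_vec n"
  shows "P * (A + outer n u u) * transpose_mat P = P * A * transpose_mat P + outer n (P *\<^sub>v u) (P *\<^sub>v u)"
proof -
  have "P * (A + outer n u u) * transpose_mat P = P * A * transpose_mat P + P * outer n u u * transpose_mat P"
    using P A by (simp add: mult_add_distrib_mat[of _ n n _ n] add_mult_distrib_mat[of _ n n _ _ n])
  then show ?thesis using outer_conj[OF P u] by simp
qed

lemma dsum_add_outer:
  assumes A: "A \<in> carrier_mat a a" and B: "B \<in> carrier_mat r r" and v: "v \<in> carrier_vec r"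
  shows "dsum A (B + outer r v v) = dsum A B + outer (a + r) (0\<^sub>v a @\<^sub>v v) (0\<^sub>v a @\<^sub>v v)"
  by (rule eq_matI) (use A B v in \<open>auto simp: index_dsum[of _ a _ r]\<close>)

definition const_vec :: "nat \<Rightarrow> real \<Rightarrow> real vec" where
  "const_vec n c = vec n (\<lambda>_. c)"

lemma const_vec_carrier [simp]: "const_vec n c \<in> carrier_vec n"
  unfolding const_vec_def by auto

lemma const_vec_add: "const_vec (a + b) c = const_vec a c @\<^sub>v const_vec b c"
  unfolding const_vec_def by (rule eq_vecI) auto

lemma congruent_split_off_block:
  assumes A: "A \<in> carrier_mat s s" and B: "B \<in> carrier_mat r r" and Z: "Z \<in> carrier_mat z z"
    and X: "X \<in> carrier_mat x x" and s: "s = z + x"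
    and Q: "Q \<in> carrier_mat s s" "invertible_mat Q"
    and QA: "Q * A * transpose_mat Q = dsum Z X"
    and Qc: "Q *\<^sub>v const_vec s c = 0\<^sub>v z @\<^sub>v const_vec x c"
  shows "congruent (dsum A B + outer (s + r) (const_vec (s + r) c) (const_vec (s + r) c))
    (dsum Z (dsum X B + outer (x + r) (const_vec (x + r) c) (const_vec (x + r) c)))"
proof -
  let ?P = "dsum Q (1\<^sub>m r)"
  have P: "?P \<in> carrier_mat (s + r) (s + r)" "invertible_mat ?P"
    using Q by (auto intro!: invertible_mat_dsum[of _ s _ r] invertible_mat_one)
  have PAB: "?P * dsum A B * transpose_mat ?P = dsum (dsum Z X) B"
    using A B Q QA transpose_dsum[of Q s "1\<^sub>m r" r] dsum_mult[of Q s "1\<^sub>m r" r A B]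
      dsum_mult[of "Q * A" s "1\<^sub>m r * B" r "transpose_mat Q" "transpose_mat (1\<^sub>m r)"] by simp
  have "?P *\<^sub>v const_vec (s + r) c = (Q *\<^sub>v const_vec s c) @\<^sub>v (1\<^sub>m r *\<^sub>v const_vec r c)"
    unfolding const_vec_add dsum_def using Q mult_mat_vec_split[of Q s "1\<^sub>m r" r] by simp
  also have "\<dots> = 0\<^sub>v z @\<^sub>v const_vec (x + r) c"
    unfolding Qc const_vec_add by (rule eq_vecI) auto
  finally have Pc: "?P *\<^sub>v const_vec (s + r) c = 0\<^sub>v z @\<^sub>v const_vec (x + r) c" .
  have "?P * (dsum A B + outer (s + r) (const_vec (s + r) c) (const_vec (s + r) c)) * transpose_mat ?P
      = dsum (dsum Z X) B + outer (s + r) (0\<^sub>v z @\<^sub>v const_vec (x + r) c) (0\<^sub>v z @\<^sub>v const_vec (x + r) c)"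
    using conj_add_outer[OF P(1) dsum_carrier_mat[OF A B] const_vec_carrier] PAB Pc by simp
  also have "\<dots> = dsum Z (dsum X B + outer (x + r) (const_vec (x + r) c) (const_vec (x + r) c))"
    using dsum_add_outer[of Z z "dsum X B" "x + r"] dsum_assoc[OF Z X B] X B Z s by (simp add: add.assoc)
  finally show ?thesis using A B P by (intro congruentI[of _ "s + r" ?P]) auto
qed

lemma row_dsum_one_scalar_prod:
  assumes Q: "Q \<in> carrier_mat s s" and v: "v \<in> carrier_vec (s + r)" and i: "i < s + r"
  shows "row (dsum Q (1\<^sub>m r)) i \<bullet> v = (if i < s then (\<Sum>l<s. Q $$ (i, l) * v $ l) else v $ i)"
proof -
  have "row (dsum Q (1\<^sub>m r)) i \<bullet> v =
      (\<Sum>l<s + r. if i < s then (if l < s then Q $$ (i, l) * v $ l else 0) else (if l = i then v $ l else 0))"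
    using Q v i by (auto simp: scalar_prod_def lessThan_atLeast0 index_dsum[of _ s _ r] intro!: sum.cong)
  also have "\<dots> = (if i < s then (\<Sum>l<s. Q $$ (i, l) * v $ l) else v $ i)"
  proof (cases "i < s")
    case True
    have "{l \<in> {..<s + r}. l < s} = {..<s}" by auto
    then show ?thesis using True sum.inter_filter[of "{..<s + r}" "\<lambda>l. Q $$ (i, l) * v $ l" "\<lambda>l. l < s"]
      by simp
  qed (use i in auto)
  finally show ?thesis .
qed

lemma index_dsum_one_mult:
  assumes "Q \<in> carrier_mat s s" "M \<in> carrier_mat (s + r) n" "i < s + r" "j < n"
  shows "(dsum Q (1\<^sub>m r) * M) $$ (i, j) = (if i < s then (\<Sum>l<s. Q $$ (i, l) * M $$ (l, j)) else M $$ (i, j))"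
  using assms row_dsum_one_scalar_prod[of Q s "col M j" r i] by simp

lemma index_mult_transpose_dsum_one:
  assumes "Q \<in> carrier_mat s s" "M \<in> carrier_mat n (s + r)" "i < n" "j < s + r"
  shows "(M * transpose_mat (dsum Q (1\<^sub>m r))) $$ (i, j) =
    (if j < s then (\<Sum>l<s. Q $$ (j, l) * M $$ (i, l)) else M $$ (i, j))"
  using assms row_dsum_one_scalar_prod[of Q s "row M i" r j]
  by (simp add: comm_scalar_prod[of "row M i" "s + r"])

lemma index_conj_dsum_one:
  assumes Q: "Q \<in> carrier_mat s s" and M: "M \<in> carrier_mat (s + r) (s + r)" and i: "i < s + r" and j: "j < s + r"
  shows "(dsum Q (1\<^sub>m r) * M * transpose_mat (dsum Q (1\<^sub>m r))) $$ (i, j) =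
    (if i < s then (if j < s then (\<Sum>l'<s. \<Sum>l<s. Q $$ (i, l) * M $$ (l, l') * Q $$ (j, l'))
                    else (\<Sum>l<s. Q $$ (i, l) * M $$ (l, j)))
     else (if j < s then (\<Sum>l<s. Q $$ (j, l) * M $$ (i, l)) else M $$ (i, j)))"
proof -
  have QM: "dsum Q (1\<^sub>m r) * M \<in> carrier_mat (s + r) (s + r)"
    using Q M by (intro mult_carrier_mat[of _ _ "s + r"]) auto
  show ?thesis
    unfolding index_mult_transpose_dsum_one[OF Q QM i j]
    using Q M i j by (auto simp: index_dsum_one_mult[OF Q M i] sum_distrib_left sum_distrib_right mult_ac
        simp del: index_mult_mat intro!: sum.cong)
qed

lemma index_dsum_one_mult_vec:
  assumes "Q \<in> carrier_mat s s" "v \<in> carrier_vec (s + r)" "i < s + r"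
  shows "(dsum Q (1\<^sub>m r) *\<^sub>v v) $ i = (if i < s then (\<Sum>l<s. Q $$ (i, l) * v $ l) else v $ i)"
  using assms row_dsum_one_scalar_prod[of Q s v r i] by simp

definition skew_ones :: "nat \<Rightarrow> real mat" where
  "skew_ones k = mat k k (\<lambda>(i, j). if i < j then 1 else if j < i then -1 else 0)"

lemma skew_ones_carrier [simp]: "skew_ones k \<in> carrier_mat k k"
  unfolding skew_ones_def by auto

lemma dim_skew_ones [simp]: "dim_row (skew_ones k) = k" "dim_col (skew_ones k) = k"
  unfolding skew_ones_def by auto

lemma index_skew_ones [simp]:
  "i < k \<Longrightarrow> j < k \<Longrightarrow> skew_ones k $$ (i, j) = (if i < j then 1 else if j < i then -1 else 0)"
  unfolding skew_ones_def by auto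

fun skew_blocks :: "nat list \<Rightarrow> real mat" where
  "skew_blocks [] = 0\<^sub>m 0 0"
| "skew_blocks (k # \<beta>) = dsum (skew_ones k) (skew_blocks \<beta>)"

lemma skew_blocks_carrier [simp]: "skew_blocks \<alpha> \<in> carrier_mat (sum_list \<alpha>) (sum_list \<alpha>)"
  by (induction \<alpha>) auto

definition model_form :: "real \<Rightarrow> nat list \<Rightarrow> real mat" where
  "model_form c \<alpha> = skew_blocks \<alpha> + outer (sum_list \<alpha>) (const_vec (sum_list \<alpha>) c) (const_vec (sum_list \<alpha>) c)"

lemma model_form_carrier [simp]: "model_form c \<alpha> \<in> carrier_mat (sum_list \<alpha>) (sum_list \<alpha>)"
  unfolding model_form_def by simp

lemma dim_model_form [simp]:
  "dim_row (model_form c \<alpha>) = sum_list \<alpha>" "dim_col (model_form c \<alpha>) = sum_list \<alpha>"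
  using model_form_carrier by (metis carrier_matD)+

lemma model_form_Cons: "model_form c (k # \<beta>) = dsum (skew_ones k) (skew_blocks \<beta>)
    + outer (k + sum_list \<beta>) (const_vec (k + sum_list \<beta>) c) (const_vec (k + sum_list \<beta>) c)"
  unfolding model_form_def by simp

lemma model_form_Cons_Cons: "model_form c (a # b # \<gamma>) = dsum (dsum (skew_ones a) (skew_ones b)) (skew_blocks \<gamma>)
    + outer (a + b + sum_list \<gamma>) (const_vec (a + b + sum_list \<gamma>) c) (const_vec (a + b + sum_list \<gamma>) c)"
  unfolding model_form_def by (simp add: dsum_assoc[of _ a _ b _ "sum_list \<gamma>"] add.assoc)

lemma dim_H2m [simp]: "dim_row H2m = 2" "dim_col H2m = 2"
  using H2m_carrier by (metis carrier_matD)+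

lemma index_H2m:
  "i < 2 \<Longrightarrow> j < 2 \<Longrightarrow> H2m $$ (i, j) = (if i = 0 \<and> j = 1 then 1 else if i = 1 \<and> j = 0 then -1 else 0)"
  unfolding H2m_def mat_of_rows_list_def by (auto simp: less_2_cases_iff)

lemma less_numeral_cases [simp]:
  "(i :: nat) < 2 \<longleftrightarrow> i = 0 \<or> i = 1" "i < 3 \<longleftrightarrow> i = 0 \<or> i = 1 \<or> i = 2"
  "i < 4 \<longleftrightarrow> i = 0 \<or> i = 1 \<or> i = 2 \<or> i = 3"
  by auto

lemmas small_mat_simps = mat_of_rows_list_def scalar_prod_def const_vec_def
  lessThan_nat_numeral atLeastLessThan_nat_numeral less_Suc_eq atLeastLessThanSuc

lemma congruent_model_form_shorten:
  assumes "k \<ge> 3"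
  shows "congruent (model_form c (k # \<beta>)) (dsum H2m (model_form c ((k - 2) # \<beta>)))"
proof -
  obtain r where k: "k = 3 + r" using assms by (metis add.commute le_Suc_ex)
  (* The rows e1 - e2, e2 - e3, e1 - e2 + e3 of Q are the new basis: the first two form a hyperbolic
     pair orthogonal to the third and to every later e_j, and the row sums of Q are 0, 0, 1. *)
  let ?Q = "mat_of_rows_list 3 [[1, -1, 0], [0, 1, -1], [1, -1, 1]] :: real mat"
  have Q: "?Q \<in> carrier_mat 3 3" by (auto simp: mat_of_rows_list_def)
  have "invertible_mat ?Q"
    by (rule invertible_mat_right_inverse[OF Q, of "mat_of_rows_list 3 [[0, 1, 1], [-1, 1, 1], [-1, 0, 1]]"])
      (auto simp: small_mat_simps intro!: eq_matI)
  then have inv: "invertible_mat (dsum ?Q (1\<^sub>m r))"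
    using Q by (intro invertible_mat_dsum[of _ 3 _ r]) (auto simp: invertible_mat_one)
  have conj: "dsum ?Q (1\<^sub>m r) * skew_ones (3 + r) * transpose_mat (dsum ?Q (1\<^sub>m r)) = dsum H2m (skew_ones (1 + r))"
  proof (rule eq_matI)
    fix i j assume "i < dim_row (dsum H2m (skew_ones (1 + r)))" "j < dim_col (dsum H2m (skew_ones (1 + r)))"
    then have i: "i < 3 + r" and j: "j < 3 + r" by (auto simp: H2m_def mat_of_rows_list_def skew_ones_def)
    have H: "dsum H2m (skew_ones (1 + r)) $$ (i, j) = (if i < 2 then (if j < 2 then H2m $$ (i, j) else 0)
        else (if j < 2 then 0 else skew_ones (1 + r) $$ (i - 2, j - 2)))"
      by (rule index_dsum[of _ 2 _ "1 + r"]) (use i j in auto)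
    show "(dsum ?Q (1\<^sub>m r) * skew_ones (3 + r) * transpose_mat (dsum ?Q (1\<^sub>m r))) $$ (i, j)
        = dsum H2m (skew_ones (1 + r)) $$ (i, j)"
      unfolding index_conj_dsum_one[OF Q skew_ones_carrier i j] H
      using i j by (cases "i < 3"; cases "j < 3")
        (auto simp: mat_of_rows_list_def lessThan_nat_numeral skew_ones_def index_H2m)
  qed (auto simp: H2m_def mat_of_rows_list_def skew_ones_def)
  have vec: "dsum ?Q (1\<^sub>m r) *\<^sub>v const_vec (3 + r) c = 0\<^sub>v 2 @\<^sub>v const_vec (1 + r) c"
  proof (rule eq_vecI)
    fix i assume "i < dim_vec (0\<^sub>v 2 @\<^sub>v const_vec (1 + r) c)"
    then have i: "i < 3 + r" by (simp add: const_vec_def)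
    show "(dsum ?Q (1\<^sub>m r) *\<^sub>v const_vec (3 + r) c) $ i = (0\<^sub>v 2 @\<^sub>v const_vec (1 + r) c) $ i"
      unfolding index_dsum_one_mult_vec[OF Q const_vec_carrier i]
      using i by (auto simp: mat_of_rows_list_def lessThan_nat_numeral const_vec_def)
  qed (use Q in \<open>simp add: const_vec_def\<close>)
  have "congruent (model_form c ((3 + r) # \<beta>)) (dsum H2m (model_form c ((1 + r) # \<beta>)))"
    unfolding model_form_Cons
    by (rule congruent_split_off_block[OF skew_ones_carrier skew_blocks_carrier H2m_carrier skew_ones_carrier
        _ _ inv conj vec]) (use Q in auto)
  then show ?thesis using k by (simp add: numeral_eq_Suc)
qed

lemma congruent_model_form_pair:
  assumes "Q \<in> carrier_mat (a + b) (a + b)" "invertible_mat Q"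
    and "Q * dsum (skew_ones a) (skew_ones b) * transpose_mat Q = dsum Z (skew_ones b')"
    and "Q *\<^sub>v const_vec (a + b) c = 0\<^sub>v z @\<^sub>v const_vec b' c"
    and "Z \<in> carrier_mat z z" "a + b = z + b'"
  shows "congruent (model_form c (a # b # \<gamma>)) (dsum Z (model_form c (b' # \<gamma>)))"
  unfolding model_form_Cons_Cons model_form_Cons[of c b' \<gamma>]
  by (rule congruent_split_off_block[OF dsum_carrier_mat[OF skew_ones_carrier skew_ones_carrier]
        skew_blocks_carrier assms(5) skew_ones_carrier assms(6) assms(1-4)])

lemma congruent_model_form_1_1:
  "congruent (model_form c (1 # 1 # \<gamma>)) (dsum (0\<^sub>m 1 1) (model_form c (1 # \<gamma>)))"
proof -
  let ?Q = "mat_of_rows_list 2 [[1, -1], [0, 1]] :: real mat"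
  have Q: "?Q \<in> carrier_mat (1 + 1) (1 + 1)" by (auto simp: mat_of_rows_list_def)
  have "invertible_mat ?Q"
    by (rule invertible_mat_right_inverse[OF Q, of "mat_of_rows_list 2 [[1, 1], [0, 1]]"])
      (auto simp: small_mat_simps intro!: eq_matI)
  moreover have "?Q * dsum (skew_ones 1) (skew_ones 1) * transpose_mat ?Q = dsum (0\<^sub>m 1 1) (skew_ones 1)"
    by (rule eq_matI) (auto simp: small_mat_simps index_dsum[of _ 1 _ 1])
  moreover have "?Q *\<^sub>v const_vec (1 + 1) c = 0\<^sub>v 1 @\<^sub>v const_vec 1 c"
    by (rule eq_vecI) (auto simp: small_mat_simps)
  ultimately show ?thesis using Q by (intro congruent_model_form_pair[of ?Q _ _ _ _ _ 1]) auto
qed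

lemma congruent_model_form_2_1:
  "congruent (model_form c (2 # 1 # \<gamma>)) (dsum H2m (model_form c (1 # \<gamma>)))"
proof -
  let ?Q = "mat_of_rows_list 3 [[1, -1, 0], [0, 1, -1], [0, 0, 1]] :: real mat"
  have Q: "?Q \<in> carrier_mat (2 + 1) (2 + 1)" by (auto simp: mat_of_rows_list_def)
  have "invertible_mat ?Q"
    by (rule invertible_mat_right_inverse[OF Q, of "mat_of_rows_list 3 [[1, 1, 1], [0, 1, 1], [0, 0, 1]]"])
      (auto simp: small_mat_simps intro!: eq_matI)
  moreover have "?Q * dsum (skew_ones 2) (skew_ones 1) * transpose_mat ?Q = dsum H2m (skew_ones 1)"
    by (rule eq_matI) (auto simp: small_mat_simps index_H2m index_dsum[of _ 2 _ 1])
  moreover have "?Q *\<^sub>v const_vec (2 + 1) c = 0\<^sub>v 2 @\<^sub>v const_vec 1 c"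
    by (rule eq_vecI) (auto simp: small_mat_simps)
  ultimately show ?thesis using Q by (intro congruent_model_form_pair[of ?Q _ _ _ _ _ 2]) auto
qed

lemma congruent_model_form_2_2:
  "congruent (model_form c (2 # 2 # \<gamma>)) (dsum H2m (model_form c (2 # \<gamma>)))"
proof -
  let ?Q = "mat_of_rows_list 4 [[1, -1, 0, 0], [0, 1, 0, -1], [1, -1, 1, 0], [0, 0, 0, 1]] :: real mat"
  have Q: "?Q \<in> carrier_mat (2 + 2) (2 + 2)" by (auto simp: mat_of_rows_list_def)
  have "invertible_mat ?Q"
    by (rule invertible_mat_right_inverse[OF Q,
          of "mat_of_rows_list 4 [[1, 1, 0, 1], [0, 1, 0, 1], [-1, 0, 1, 0], [0, 0, 0, 1]]"])
      (auto simp: small_mat_simps intro!: eq_matI)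
  moreover have "?Q * dsum (skew_ones 2) (skew_ones 2) * transpose_mat ?Q = dsum H2m (skew_ones 2)"
    by (rule eq_matI) (auto simp: small_mat_simps index_H2m index_dsum[of _ 2 _ 2])
  moreover have "?Q *\<^sub>v const_vec (2 + 2) c = 0\<^sub>v 2 @\<^sub>v const_vec 2 c"
    by (rule eq_vecI) (auto simp: small_mat_simps)
  ultimately show ?thesis using Q by (intro congruent_model_form_pair[of ?Q _ _ _ _ _ 2]) auto
qed

lemma swap_mat_mult_const_vec: "swap_mat a b *\<^sub>v const_vec (a + b) c = 0\<^sub>v 0 @\<^sub>v const_vec (b + a) c"
proof -
  have "swap_mat a b *\<^sub>v (const_vec a c @\<^sub>v const_vec b c) = (0\<^sub>m b a *\<^sub>v const_vec a c + 1\<^sub>m b *\<^sub>v const_vec b c)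
      @\<^sub>v (1\<^sub>m a *\<^sub>v const_vec a c + 0\<^sub>m a b *\<^sub>v const_vec b c)"
    unfolding swap_mat_def by (rule four_block_mat_mult_vec) auto
  also have "\<dots> = 0\<^sub>v 0 @\<^sub>v const_vec (b + a) c"
    by (rule eq_vecI) (auto simp: const_vec_def)
  finally show ?thesis unfolding const_vec_add .
qed

lemma congruent_model_form_swap: "congruent (model_form c (a # b # \<gamma>)) (model_form c (b # a # \<gamma>))"
proof -
  have "swap_mat a b * dsum (skew_ones a) (skew_ones b) * transpose_mat (swap_mat a b)
      = dsum (0\<^sub>m 0 0) (dsum (skew_ones b) (skew_ones a))"
    by (simp add: swap_mat_conj)
  then have "congruent (model_form c (a # b # \<gamma>)) (dsum (0\<^sub>m 0 0) (model_form c (b # a # \<gamma>)))"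
    unfolding model_form_Cons_Cons
    by (intro congruent_split_off_block[OF _ skew_blocks_carrier _ _ _ swap_mat_carrier invertible_swap_mat _
          swap_mat_mult_const_vec]) (auto simp: add.commute)
  then show ?thesis by simp
qed

lemma congruent_model_form_1:
  assumes c: "c \<noteq> 0"
  shows "congruent (model_form c [1]) (1\<^sub>m 1)"
proof (rule congruentI)
  show "invertible_mat (mat 1 1 (\<lambda>_. 1 / c))"
    using c by (intro invertible_mat_right_inverse[of _ 1 "mat 1 1 (\<lambda>_. c)"])
      (auto simp: scalar_prod_def intro!: eq_matI)
  show "mat 1 1 (\<lambda>_. 1 / c) * model_form c [1] * transpose_mat (mat 1 1 (\<lambda>_. 1 / c)) = 1\<^sub>m 1"
    using c by (auto simp: model_form_def scalar_prod_def const_vec_def intro!: eq_matI)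
qed (use model_form_carrier[of c "[1]"] in auto)

lemma congruent_model_form_2:
  assumes c: "c \<noteq> 0"
  shows "congruent (model_form c [2]) Gamma2"
proof (rule congruentI)
  let ?P = "mat_of_rows_list 2 [[-c, c], [0, 1 / c]]"
  show "?P \<in> carrier_mat 2 2" by (auto simp: mat_of_rows_list_def)
  then show "invertible_mat ?P"
    using c by (intro invertible_mat_right_inverse[of _ 2 "mat_of_rows_list 2 [[-1 / c, c], [0, c]]"])
      (auto simp: small_mat_simps intro!: eq_matI)
  show "?P * model_form c [2] * transpose_mat ?P = Gamma2"
    using c by (auto simp: small_mat_simps Gamma2_def model_form_def intro!: eq_matI)
      (auto simp: field_simps)
qed (use model_form_carrier[of c "[2]"] in auto)

definition normal_form :: "nat list \<Rightarrow> real mat" where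
  "normal_form \<alpha> = (if \<forall>a \<in> set \<alpha>. even a
     then dsum Gamma2 (dpow H2m ((sum_list \<alpha> - 2) div 2))
     else dsum (1\<^sub>m 1) (dsum (dpow H2m ((sum_list \<alpha> - nodd \<alpha>) div 2)) (0\<^sub>m (nodd \<alpha> - 1) (nodd \<alpha> - 1))))"

lemma nodd_Nil [simp]: "nodd [] = 0"
  unfolding nodd_def by simp

lemma nodd_Cons [simp]: "nodd (k # \<beta>) = (if odd k then Suc (nodd \<beta>) else nodd \<beta>)"
  unfolding nodd_def by simp

lemma nodd_le_sum_list: "nodd \<alpha> \<le> sum_list \<alpha>"
  by (induction \<alpha>) (auto dest: odd_pos)

lemma nodd_pos: "\<not> (\<forall>a \<in> set \<alpha>. even a) \<Longrightarrow> nodd \<alpha> > 0"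
  by (induction \<alpha>) auto

lemma congruent_dsum_exchange:
  assumes "A \<in> carrier_mat a a" "B \<in> carrier_mat b b" "C \<in> carrier_mat c c"
  shows "congruent (dsum A (dsum B C)) (dsum B (dsum A C))"
proof -
  have "congruent (dsum (dsum A B) C) (dsum (dsum B A) C)"
    using assms by (intro congruent_dsum congruent_dsum_commute congruent_refl)
  then show ?thesis using assms by (simp add: dsum_assoc)
qed

lemma congruent_dsum_H2m_normal_form:
  assumes pos: "\<forall>a \<in> set \<alpha>'. a > 0" and ne: "\<alpha>' \<noteq> []" and sum: "sum_list \<alpha> = sum_list \<alpha>' + 2"
    and even: "(\<forall>a \<in> set \<alpha>. even a) = (\<forall>a \<in> set \<alpha>'. even a)" and odd: "nodd \<alpha> = nodd \<alpha>'"
  shows "congruent (dsum H2m (normal_form \<alpha>')) (normal_form \<alpha>)"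
proof (cases "\<forall>a \<in> set \<alpha>'. even a")
  case True
  define r where "r = (sum_list \<alpha>' - 2) div 2"
  obtain k \<beta> where "\<alpha>' = k # \<beta>" using ne by (cases \<alpha>') auto
  then have "sum_list \<alpha>' \<ge> 2" using pos True by (auto elim!: evenE)
  then have "(sum_list \<alpha> - 2) div 2 = Suc r" using sum unfolding r_def by simp
  moreover have "congruent (dsum H2m (dsum Gamma2 (dpow H2m r))) (dsum Gamma2 (dsum H2m (dpow H2m r)))"
    by (rule congruent_dsum_exchange[of _ 2 _ 2 _ "2 * r"]) simp_all
  ultimately show ?thesis
    using True even unfolding normal_form_def r_def by simp
next
  case False
  then have odd_\<alpha>: "\<not> (\<forall>a \<in> set \<alpha>. even a)" using even by simp
  define r where "r = (sum_list \<alpha>' - nodd \<alpha>') div 2"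
  define Y where "Y = dsum (dpow H2m r) (0\<^sub>m (nodd \<alpha>' - 1) (nodd \<alpha>' - 1))"
  have "(sum_list \<alpha> - nodd \<alpha>) div 2 = Suc r"
    using sum odd nodd_le_sum_list[of \<alpha>'] unfolding r_def by simp
  then have "normal_form \<alpha> = dsum (1\<^sub>m 1) (dsum H2m Y)"
    unfolding normal_form_def if_not_P[OF odd_\<alpha>] Y_def odd
    by (simp add: dsum_assoc[of H2m 2 _ "2 * r" _ "nodd \<alpha>' - 1"])
  moreover have "normal_form \<alpha>' = dsum (1\<^sub>m 1) Y"
    unfolding normal_form_def if_not_P[OF False] Y_def r_def ..
  moreover have "congruent (dsum H2m (dsum (1\<^sub>m 1) Y)) (dsum (1\<^sub>m 1) (dsum H2m Y))"
    by (rule congruent_dsum_exchange[of _ 2 _ 1 _ "2 * r + (nodd \<alpha>' - 1)"]) (simp_all add: Y_def)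
  ultimately show ?thesis by simp
qed

lemma congruent_dsum_zero_normal_form:
  assumes sum: "sum_list \<alpha> = sum_list \<alpha>' + 1" and odd: "nodd \<alpha> = Suc (nodd \<alpha>')"
    and "\<not> (\<forall>a \<in> set \<alpha>. even a)" "\<not> (\<forall>a \<in> set \<alpha>'. even a)"
  shows "congruent (dsum (0\<^sub>m 1 1) (normal_form \<alpha>')) (normal_form \<alpha>)"
proof -
  define r where "r = (sum_list \<alpha>' - nodd \<alpha>') div 2"
  define s where "s = nodd \<alpha>' - 1"
  have r: "(sum_list \<alpha> - nodd \<alpha>) div 2 = r" and s: "nodd \<alpha> - 1 = s + 1"
    using sum odd nodd_pos[OF assms(4)] unfolding r_def s_def by auto
  let ?Y = "dsum (dpow H2m r) (0\<^sub>m s s)"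
  have Y: "?Y \<in> carrier_mat (2 * r + s) (2 * r + s)" by simp
  have "congruent (dsum (0\<^sub>m 1 1) (dsum (1\<^sub>m 1) ?Y)) (dsum (1\<^sub>m 1) (dsum (0\<^sub>m 1 1) ?Y))"
    using Y by (intro congruent_dsum_exchange[OF _ _ Y]) auto
  also have "congruent \<dots> (dsum (1\<^sub>m 1) (dsum ?Y (0\<^sub>m 1 1)))"
    using Y by (intro congruent_dsum_left[OF congruent_dsum_commute[OF _ Y]]) auto
  also have "dsum ?Y (0\<^sub>m 1 1) = dsum (dpow H2m r) (0\<^sub>m (s + 1) (s + 1))"
    using dsum_assoc[of "dpow H2m r" "2 * r" "0\<^sub>m s s" s "0\<^sub>m 1 1" 1] by (simp add: dsum_zero_mat)
  finally show ?thesis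
    unfolding normal_form_def if_not_P[OF assms(3)] if_not_P[OF assms(4)] r s r_def[symmetric] s_def[symmetric] .
qed

lemma model_form_reduction:
  assumes pos: "\<forall>a \<in> set \<alpha>. a > 0" and "\<alpha> \<noteq> []" "\<alpha> \<noteq> [1]" "\<alpha> \<noteq> [2]"
  obtains (H2m) \<alpha>' where "\<forall>a \<in> set \<alpha>'. a > 0" "\<alpha>' \<noteq> []" "sum_list \<alpha> = sum_list \<alpha>' + 2"
      "(\<forall>a \<in> set \<alpha>. even a) = (\<forall>a \<in> set \<alpha>'. even a)" "nodd \<alpha> = nodd \<alpha>'"
      "congruent (model_form c \<alpha>) (dsum H2m (model_form c \<alpha>'))"
  | (zero) \<alpha>' where "\<forall>a \<in> set \<alpha>'. a > 0" "\<alpha>' \<noteq> []" "sum_list \<alpha> = sum_list \<alpha>' + 1"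
      "nodd \<alpha> = Suc (nodd \<alpha>')" "\<not> (\<forall>a \<in> set \<alpha>. even a)" "\<not> (\<forall>a \<in> set \<alpha>'. even a)"
      "congruent (model_form c \<alpha>) (dsum (0\<^sub>m 1 1) (model_form c \<alpha>'))"
proof -
  obtain k \<beta> where \<alpha>: "\<alpha> = k # \<beta>" using assms(2) by (cases \<alpha>) auto
  then have k: "k > 0" and \<beta>: "\<forall>a \<in> set \<beta>. a > 0" using pos by auto
  consider (long) "k \<ge> 3" | (second_long) b \<gamma> where "\<beta> = b # \<gamma>" "b \<ge> 3"
    | (short_pair) b \<gamma> where "\<beta> = b # \<gamma>" "k \<in> {1, 2}" "b \<in> {1, 2}"
    using k \<beta> \<alpha> assms(3,4) by (cases \<beta>) force+
  then show ?thesis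
  proof cases
    case long
    then show ?thesis
      using congruent_model_form_shorten[OF long, of c \<beta>] \<alpha> \<beta> by (intro H2m[of "(k - 2) # \<beta>"]) auto
  next
    case (second_long b \<gamma>)
    then show ?thesis
      using congruent_trans[OF congruent_model_form_swap congruent_model_form_shorten[OF second_long(2)]]
        \<alpha> \<beta> k by (intro H2m[of "(b - 2) # k # \<gamma>"]) auto
  next
    case (short_pair b \<gamma>)
    have \<gamma>: "\<forall>a \<in> set \<gamma>. a > 0" using \<beta> short_pair by simp
    consider "k = 1" "b = 1" | "k = 2" "b = 1" | "k = 1" "b = 2" | "k = 2" "b = 2"
      using short_pair by blast
    then show ?thesis
    proof cases
      case 1
      then show ?thesis
        using congruent_model_form_1_1 short_pair \<alpha> \<gamma> by (intro zero[of "1 # \<gamma>"]) auto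
    next
      case 2
      then show ?thesis
        using congruent_model_form_2_1 short_pair \<alpha> \<gamma> by (intro H2m[of "1 # \<gamma>"]) auto
    next
      case 3
      then show ?thesis
        using congruent_trans[OF congruent_model_form_swap congruent_model_form_2_1] short_pair \<alpha> \<gamma>
        by (intro H2m[of "1 # \<gamma>"]) auto
    next
      case 4
      then show ?thesis
        using congruent_model_form_2_2 short_pair \<alpha> \<gamma> by (intro H2m[of "2 # \<gamma>"]) auto
    qed
  qed
qed

theorem congruent_model_form_normal_form:
  assumes "\<forall>a \<in> set \<alpha>. a > 0" "\<alpha> \<noteq> []" "c \<noteq> 0"
  shows "congruent (model_form c \<alpha>) (normal_form \<alpha>)"
  using assms(1,2)
proof (induction "sum_list \<alpha>" arbitrary: \<alpha> rule: less_induct)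
  case less
  show ?case
  proof (cases "\<alpha> = [1] \<or> \<alpha> = [2]")
    case True
    then show ?thesis
      using congruent_model_form_1[OF assms(3)] congruent_model_form_2[OF assms(3)]
      by (auto simp: normal_form_def)
  next
    case False
    then have not_single: "\<alpha> \<noteq> [1]" "\<alpha> \<noteq> [2]" by auto
    show ?thesis
    proof (cases rule: model_form_reduction[OF less.prems not_single, of c, case_names H2m zero])
      case (H2m \<alpha>')
      have "congruent (model_form c \<alpha>) (dsum H2m (model_form c \<alpha>'))" by (fact H2m(6))
      also have "congruent \<dots> (dsum H2m (normal_form \<alpha>'))"
        using less.hyps[of \<alpha>'] H2m by (intro congruent_dsum_left) auto
      also have "congruent \<dots> (normal_form \<alpha>)"
        using H2m by (intro congruent_dsum_H2m_normal_form)
      finally show ?thesis .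
    next
      case (zero \<alpha>')
      have "congruent (model_form c \<alpha>) (dsum (0\<^sub>m 1 1) (model_form c \<alpha>'))" by (fact zero(7))
      also have "congruent \<dots> (dsum (0\<^sub>m 1 1) (normal_form \<alpha>'))"
        using less.hyps[of \<alpha>'] zero by (intro congruent_dsum_left) auto
      also have "congruent \<dots> (normal_form \<alpha>)"
        using zero by (intro congruent_dsum_zero_normal_form)
      finally show ?thesis .
    qed
  qed
qed

section \<open>The free nilpotent group of step 2\<close>

lemma tmult_unipotent:
  assumes "w \<in> carrier_vec m" "u \<in> carrier_vec m" "A \<in> carrier_mat m m" "B \<in> carrier_mat m m"
  shows "tmult m (1, w, A) (1, u, B) = (1, w + u, A + B + outer m w u)"
  unfolding tmult_def using assms by (auto simp: comm_add_vec comm_add_mat)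

lemma texp_tlie:
  assumes "v \<in> carrier_vec m" "B \<in> carrier_mat m m"
  shows "texp m (0, v, B) = (1, v, B + (1/2) \<cdot>\<^sub>m outer m v v)"
  unfolding texp_def tmult_def tadd_def tone_def using assms by (auto intro!: eq_vecI eq_matI)

lemma index_sym_part:
  assumes "A \<in> carrier_mat m m" "A + transpose_mat A = outer m w w" "i < m" "j < m"
  shows "A $$ (i, j) + A $$ (j, i) = w $ i * w $ j"
proof -
  have "(A + transpose_mat A) $$ (i, j) = outer m w w $$ (i, j)" by (simp only: assms(2))
  then show ?thesis using assms(1,3,4) by simp
qed

lemma mem_tgroup_iff:
  "g \<in> tgroup m \<longleftrightarrow> (\<exists>w A. g = (1, w, A) \<and> w \<in> carrier_vec m \<and> A \<in> carrier_mat m m \<and>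
     A + transpose_mat A = outer m w w)"
proof
  assume "g \<in> tgroup m"
  then obtain v B where g: "g = texp m (0, v, B)" and v: "v \<in> carrier_vec m" and B: "B \<in> carrier_mat m m"
    and skew: "transpose_mat B = - B"
    unfolding tgroup_def tlie_def by auto
  have "B $$ (i, j) + B $$ (j, i) = 0" if "i < m" "j < m" for i j
    using arg_cong[OF skew, of "\<lambda>M. M $$ (i, j)"] that B by auto
  then have "B + (1/2) \<cdot>\<^sub>m outer m v v + transpose_mat (B + (1/2) \<cdot>\<^sub>m outer m v v) = outer m v v"
    using B by (auto intro!: eq_matI)
  then show "\<exists>w A. g = (1, w, A) \<and> w \<in> carrier_vec m \<and> A \<in> carrier_mat m m \<and> A + transpose_mat A = outer m w w"
    using g v B by (auto simp: texp_tlie)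
next
  assume "\<exists>w A. g = (1, w, A) \<and> w \<in> carrier_vec m \<and> A \<in> carrier_mat m m \<and> A + transpose_mat A = outer m w w"
  then obtain w A where g: "g = (1, w, A)" and w: "w \<in> carrier_vec m" and A: "A \<in> carrier_mat m m"
    and sym: "A + transpose_mat A = outer m w w" by auto
  let ?B = "A - (1/2) \<cdot>\<^sub>m outer m w w"
  have "transpose_mat ?B = - ?B"
  proof (rule eq_matI)
    fix i j assume "i < dim_row (- ?B)" "j < dim_col (- ?B)"
    with A index_sym_part[OF A sym, of i j] show "transpose_mat ?B $$ (i, j) = (- ?B) $$ (i, j)"
      by (simp add: mult.commute[of "w $ j"]; linarith)
  qed (use A in auto)
  then have "(0, w, ?B) \<in> tlie m" unfolding tlie_def using w A by auto
  moreover have "g = texp m (0, w, ?B)"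
    unfolding g using w A by (subst texp_tlie) (auto intro!: eq_matI)
  ultimately show "g \<in> tgroup m" unfolding tgroup_def by auto
qed

lemma tinv_eq:
  assumes w: "w \<in> carrier_vec m" and A: "A \<in> carrier_mat m m" and sym: "A + transpose_mat A = outer m w w"
  shows "tinv m (1, w, A) = (1, - w, - A + outer m w w)"
  unfolding tinv_def
proof (rule the_equality)
  have "(- A + outer m w w) + transpose_mat (- A + outer m w w) = outer m (- w) (- w)"
  proof (rule eq_matI)
    fix i j assume "i < dim_row (outer m (- w) (- w))" "j < dim_col (outer m (- w) (- w))"
    with A w index_sym_part[OF A sym, of i j]
    show "((- A + outer m w w) + transpose_mat (- A + outer m w w)) $$ (i, j) = outer m (- w) (- w) $$ (i, j)"
      by (simp add: mult.commute[of "w $ j"]; linarith)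
  qed (use A in auto)
  then show "(1, - w, - A + outer m w w) \<in> tgroup m \<and> tmult m (1, w, A) (1, - w, - A + outer m w w) = tone m"
    unfolding mem_tgroup_iff using w A by (auto simp: tmult_unipotent tone_def intro!: eq_vecI eq_matI)
next
  fix y assume y: "y \<in> tgroup m \<and> tmult m (1, w, A) y = tone m"
  then obtain u B where y_eq: "y = (1, u, B)" and u: "u \<in> carrier_vec m" and B: "B \<in> carrier_mat m m"
    unfolding mem_tgroup_iff by auto
  have wu: "w + u = 0\<^sub>v m" and AB: "A + B + outer m w u = 0\<^sub>m m m"
    using y tmult_unipotent[OF w u A B] unfolding y_eq tone_def by auto
  have "u = - w"
  proof (rule eq_vecI)
    fix i assume "i < dim_vec (- w)"
    then show "u $ i = (- w) $ i" using arg_cong[OF wu, of "\<lambda>v. v $ i"] u w by simp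
  qed (use u w in auto)
  moreover have "B = - A + outer m w w"
  proof (rule eq_matI)
    fix i j assume "i < dim_row (- A + outer m w w)" "j < dim_col (- A + outer m w w)"
    then have "i < m" "j < m" using A by auto
    then show "B $$ (i, j) = (- A + outer m w w) $$ (i, j)"
      using arg_cong[OF AB, of "\<lambda>M. M $$ (i, j)"] A B u w \<open>u = - w\<close> by simp
  qed (use A B in auto)
  ultimately show "y = (1, - w, - A + outer m w w)" using y_eq by simp
qed

lemma tlog_eq:
  assumes "u \<in> carrier_vec m" "C \<in> carrier_mat m m"
  shows "tlog m (1, u, C) = (0, u, C - (1/2) \<cdot>\<^sub>m outer m u u)"
  unfolding tlog_def tone_def tadd_def tmult_def Let_def using assms by (auto intro!: eq_vecI eq_matI)

lemma tsum_eq: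
  assumes "\<forall>t \<in> set ts. fst (snd t) \<in> carrier_vec m \<and> snd (snd t) \<in> carrier_mat m m"
  shows "tsum m ts = (sum_list (map fst ts), vec m (\<lambda>i. \<Sum>t\<leftarrow>ts. fst (snd t) $ i),
    mat m m (\<lambda>ij. \<Sum>t\<leftarrow>ts. snd (snd t) $$ ij))"
  using assms
proof (induction ts)
  case Nil
  then show ?case unfolding tsum_def tzero_def by (auto intro!: eq_vecI eq_matI)
next
  case (Cons t ts)
  obtain a v A where t: "t = (a, v, A)" by (cases t) auto
  have "v \<in> carrier_vec m" "A \<in> carrier_mat m m" using Cons.prems t by auto
  moreover have "tsum m (t # ts) = tadd t (tsum m ts)" unfolding tsum_def by simp
  ultimately show ?case using Cons unfolding tadd_def t by (auto intro!: eq_vecI eq_matI)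
qed

section \<open>Signatures of paths along coordinate axes\<close>

definition simplex2 :: "(real \<times> real) set" where
  "simplex2 = {(s, t). 0 < s \<and> s < t \<and> t < 1}"

lemma negligible_fst_eq: "negligible {x :: real \<times> real. fst x = c}"
proof -
  have "{x :: real \<times> real. fst x = c} = {x. (1, 0) \<bullet> x = c}" by auto
  then show ?thesis using negligible_hyperplane[of "(1 :: real, 0 :: real)" c] by (simp add: zero_prod_def)
qed

lemma negligible_snd_eq: "negligible {x :: real \<times> real. snd x = c}"
proof -
  have "{x :: real \<times> real. snd x = c} = {x. (0, 1) \<bullet> x = c}" by auto
  then show ?thesis using negligible_hyperplane[of "(0 :: real, 1 :: real)" c] by (simp add: zero_prod_def)
qed

lemma negligible_diagonal: "negligible {x :: real \<times> real. fst x = snd x}"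
proof -
  have "{x :: real \<times> real. fst x = snd x} = {x. (1, -1) \<bullet> x = 0}" by auto
  then show ?thesis using negligible_hyperplane[of "(1 :: real, -1 :: real)" 0] by (simp add: zero_prod_def)
qed

lemma negligible_fst_or_snd_mem:
  assumes "finite F"
  shows "negligible {x :: real \<times> real. fst x \<in> F \<or> snd x \<in> F}"
proof -
  have "{x :: real \<times> real. fst x \<in> F \<or> snd x \<in> F} =
      (\<Union>c \<in> F. {x. fst x = c}) \<union> (\<Union>c \<in> F. {x. snd x = c})"
    by auto
  then show ?thesis
    using assms negligible_fst_eq negligible_snd_eq by (auto intro!: negligible_Union)
qed

lemma box_Pair_iff: "(x, y) \<in> box (a, c) (b, d) \<longleftrightarrow> x \<in> box a b \<and> y \<in> box c d"
  by (force simp: mem_box Basis_prod_def)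

lemma prod_swap_cbox: "prod.swap ` cbox u v = cbox (prod.swap u) (prod.swap v)"
  by (cases u; cases v) simp

lemma content_cbox_prod_swap:
  "measure lborel (cbox (prod.swap u) (prod.swap v)) = measure lborel (cbox (u :: real \<times> real) v)"
  by (cases u; cases v) (simp add: content_Pair)

text \<open>The triangle and its mirror image tile the square up to a null set.\<close>
lemma has_integral_triangle:
  fixes p q :: real
  assumes "p < q"
  shows "((\<lambda>x. 1) has_integral (q - p)^2 / 2) {(s, t). p < s \<and> s < t \<and> t < q}"
proof -
  let ?U = "{(s, t). p < s \<and> s < t \<and> t < q} :: (real \<times> real) set"
  let ?C = "cbox (p, p) (q, q)"
  let ?mU = "measure lebesgue ?U"
  have "?U = {x. p < fst x} \<inter> {x. fst x < snd x} \<inter> {x. snd x < q}" by auto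
  moreover have "open {x :: real \<times> real. p < fst x}" "open {x :: real \<times> real. fst x < snd x}"
    "open {x :: real \<times> real. snd x < q}"
    by (intro open_Collect_less continuous_intros)+
  ultimately have "open ?U" by auto
  moreover have UC: "?U \<subseteq> ?C" by auto
  then have "bounded ?U" using bounded_cbox bounded_subset by blast
  ultimately have "?U \<in> lmeasurable" by (rule lmeasurable_open[rotated])
  then have iU: "(indicat_real ?U has_integral ?mU) UNIV"
    using lmeasurable_iff_indicator_has_integral by blast
  have restrict: "(\<lambda>x. if x \<in> ?C then indicat_real ?U x else 0) = indicat_real ?U"
    using UC by (auto simp: fun_eq_iff indicator_def)
  have U: "(indicat_real ?U has_integral ?mU) ?C"
    using iU by (subst has_integral_restrict_UNIV[symmetric]) (simp add: restrict)
  have "((\<lambda>x. indicat_real ?U (prod.swap x)) has_integral (1 / 1) *\<^sub>R ?mU) (prod.swap ` ?C)"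
    by (rule has_integral_twiddle[of 1 prod.swap prod.swap, OF _ _ _ _ _ _ _ U])
      (auto simp: prod_swap_cbox content_cbox_prod_swap isCont_swap split_paired_all)
  then have L: "((\<lambda>x. indicat_real ?U (prod.swap x)) has_integral ?mU) ?C"
    by (simp add: prod_swap_cbox)
  have "((\<lambda>x. 1) has_integral ?mU + ?mU) ?C"
  proof (rule has_integral_spike[OF negligible_Un[OF negligible_frontier_interval negligible_diagonal] _
        has_integral_add[OF U L]])
    fix x assume "x \<in> ?C - ((?C - box (p, p) (q, q)) \<union> {x. fst x = snd x})"
    then have "x \<in> box (p, p) (q, q)" "fst x \<noteq> snd x" by auto
    then show "1 = indicat_real ?U x + indicat_real ?U (prod.swap x)"
      by (cases x) (auto simp: box_Pair_iff indicator_def)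
  qed
  moreover have "((\<lambda>x. 1) has_integral (q - p)^2) ?C"
    using has_integral_const[of "1::real" "(p, p)" "(q, q)"] assms
    by (simp add: content_Pair content_real power2_eq_square)
  ultimately have "?mU + ?mU = (q - p)^2" using has_integral_unique by blast
  then have mU: "?mU = (q - p)^2 / 2" by simp
  have "(\<lambda>x. if x \<in> ?U then 1 else 0) = indicat_real ?U"
    by (auto simp: fun_eq_iff indicator_def)
  then have "((\<lambda>x. 1) has_integral ?mU) ?U"
    using iU by (subst has_integral_restrict_UNIV[symmetric]) simp
  then show ?thesis unfolding mU .
qed

definition order_weight :: "nat \<Rightarrow> nat \<Rightarrow> real" where
  "order_weight i j = (if i < j then 1 else if i = j then 1/2 else 0)"

definition axis_speed :: "nat \<Rightarrow> nat \<Rightarrow> (nat \<Rightarrow> real) \<Rightarrow> (nat \<Rightarrow> real) \<Rightarrow> nat \<Rightarrow> real \<Rightarrow> real" where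
  "axis_speed a b p q c s = (if a \<le> c \<and> c < b \<and> p c < s \<and> s < q c then 1 / (q c - p c) else 0)"

lemma has_integral_box_simplex2:
  assumes "0 \<le> p1" "p1 < q1" "q1 \<le> p2" "p2 < q2" "q2 \<le> 1"
  shows "((\<lambda>x. if x \<in> box (p1, p2) (q1, q2) then h else 0) has_integral h * ((q1 - p1) * (q2 - p2))) simplex2"
proof -
  have "box (p1, p2) (q1, q2) \<subseteq> simplex2"
    using assms by (auto simp: simplex2_def box_Pair_iff)
  moreover have "((\<lambda>x. h) has_integral h * ((q1 - p1) * (q2 - p2))) (box (p1, p2) (q1, q2))"
    using has_integral_const[of h "(p1, p2)" "(q1, q2)"] assms
    by (simp add: has_integral_open_interval content_Pair content_real mult.commute)
  ultimately show ?thesis by simp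
qed

lemma has_integral_square_simplex2:
  assumes "0 \<le> p" "p < q" "q \<le> 1"
  shows "((\<lambda>x. if x \<in> box (p, p) (q, q) then h else 0) has_integral h * ((q - p)^2 / 2)) simplex2"
proof -
  let ?T = "{(s, t). p < s \<and> s < t \<and> t < q}"
  have "?T \<subseteq> simplex2" using assms by (auto simp: simplex2_def)
  moreover have "((\<lambda>x. h) has_integral h * ((q - p)^2 / 2)) ?T"
    using has_integral_mult_right[OF has_integral_triangle[OF assms(2)], of h] by (simp only: mult_1_right)
  ultimately have T: "((\<lambda>x. if x \<in> ?T then h else 0) has_integral h * ((q - p)^2 / 2)) simplex2"
    by (simp only: has_integral_restrict)
  have "(if x \<in> ?T then h else 0) = (if x \<in> box (p, p) (q, q) then h else 0)" if "x \<in> simplex2" for x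
    using that by (cases x) (auto simp: simplex2_def box_Pair_iff)
  then show ?thesis by (rule has_integral_eq[OF _ T])
qed

lemma has_integral_axis_speed:
  assumes pq: "\<forall>c \<in> {a..<b}. 0 \<le> p c \<and> p c < q c \<and> q c \<le> 1"
    and ordered: "\<forall>c \<in> {a..<b}. \<forall>c' \<in> {a..<b}. c < c' \<longrightarrow> q c \<le> p c'"
  shows "((\<lambda>(s, t). axis_speed a b p q c s * axis_speed a b p q c' t) has_integral
    (if a \<le> c \<and> c < b then 1 else 0) * (if a \<le> c' \<and> c' < b then 1 else 0) * order_weight c c') simplex2"
proof (cases "a \<le> c \<and> c < b \<and> a \<le> c' \<and> c' < b")
  case False
  then have "(\<lambda>(s, t). axis_speed a b p q c s * axis_speed a b p q c' t) = (\<lambda>x. 0)"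
    by (auto simp: axis_speed_def fun_eq_iff)
  then show ?thesis using False by auto
next
  case True
  let ?k = "1 / (q c - p c) * (1 / (q c' - p c'))"
  have speed: "(\<lambda>(s, t). axis_speed a b p q c s * axis_speed a b p q c' t) =
      (\<lambda>x. if x \<in> box (p c, p c') (q c, q c') then ?k else 0)"
    using True by (auto simp: axis_speed_def box_Pair_iff fun_eq_iff)
  have c: "0 \<le> p c" "p c < q c" "q c \<le> 1" and c': "0 \<le> p c'" "p c' < q c'" "q c' \<le> 1"
    using pq True by simp_all
  consider "c < c'" | "c = c'" | "c' < c" by linarith
  then show ?thesis
  proof cases
    case 1
    then have "q c \<le> p c'" using ordered True by simp
    from has_integral_box_simplex2[OF c(1,2) this c'(2,3), of ?k] show ?thesis
      unfolding speed using 1 True c c' by (simp add: order_weight_def)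
  next
    case 2
    from has_integral_square_simplex2[OF c, of ?k] show ?thesis
      unfolding speed using True c unfolding 2[symmetric] by (simp add: order_weight_def power2_eq_square)
  next
    case 3
    then have "q c' \<le> p c" using ordered True by auto
    then have "(if x \<in> box (p c, p c') (q c, q c') then ?k else 0) = 0" if "x \<in> simplex2" for x
      using that by (cases x) (auto simp: simplex2_def box_Pair_iff)
    then show ?thesis
      unfolding speed using 3 by (simp add: order_weight_def cong: has_integral_cong)
  qed
qed


(* X runs through the unit vectors e_a, ..., e_(b-1) in turn: coordinate c grows linearly from 0 to 1
   on the interval (p c, q c) and is constant elsewhere; F is the finite set of break points. *)
definition axis_path :: "nat \<Rightarrow> nat \<Rightarrow> (nat \<Rightarrow> real) \<Rightarrow> (nat \<Rightarrow> real) \<Rightarrow> real set \<Rightarrow> path \<Rightarrow> bool" where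
  "axis_path a b p q F X \<longleftrightarrow> finite F \<and>
     (\<forall>c \<in> {a..<b}. 0 \<le> p c \<and> p c < q c \<and> q c \<le> 1) \<and>
     (\<forall>c \<in> {a..<b}. \<forall>c' \<in> {a..<b}. c < c' \<longrightarrow> q c \<le> p c') \<and>
     (\<forall>s \<in> {0<..<1} - F. \<forall>c. ((\<lambda>r. X r c) has_real_derivative axis_speed a b p q c s) (at s)) \<and>
     (\<forall>c. X 0 c = 0) \<and> (\<forall>c. X 1 c = (if a \<le> c \<and> c < b then 1 else 0))"

lemma axis_path_axis: "axis_path a (Suc a) (\<lambda>_. 0) (\<lambda>_. 1) {} (axis a)"
proof -
  have "((\<lambda>r. axis a r c) has_real_derivative axis_speed a (Suc a) (\<lambda>_. 0) (\<lambda>_. 1) c s) (at s)"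
    if "s \<in> {0<..<1}" for s c
  proof (cases "c = a")
    case True
    then show ?thesis using that by (auto simp: axis_def axis_speed_def intro!: derivative_eq_intros)
  qed (auto simp: axis_def axis_speed_def)
  then show ?thesis unfolding axis_path_def by (auto simp: axis_def)
qed

lemma has_real_derivative_pcat_left:
  assumes "((\<lambda>r. X r c) has_real_derivative D) (at (2 * s))" "s < 1/2"
  shows "((\<lambda>r. pcat X Y r c) has_real_derivative D * 2) (at s)"
proof -
  have "((\<lambda>r. 2 * r) has_real_derivative 2) (at s)" by (auto intro!: derivative_eq_intros)
  from DERIV_chain2[OF assms(1) this] show ?thesis
    by (rule has_field_derivative_transform_within_open[where S = "{..<1/2}"])
      (use assms(2) in \<open>auto simp: pcat_def\<close>)
qed

lemma has_real_derivative_pcat_right: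
  assumes "((\<lambda>r. Y r c) has_real_derivative D) (at (2 * s - 1))" "s > 1/2"
  shows "((\<lambda>r. pcat X Y r c) has_real_derivative D * 2) (at s)"
proof -
  have "((\<lambda>r. 2 * r - 1) has_real_derivative 2) (at s)" by (auto intro!: derivative_eq_intros)
  from DERIV_chain2[OF assms(1) this]
  have "((\<lambda>r. X 1 c + Y (2 * r - 1) c) has_real_derivative D * 2) (at s)"
    using DERIV_add[OF DERIV_const] by fastforce
  then show ?thesis
    by (rule has_field_derivative_transform_within_open[where S = "{1/2<..}"])
      (use assms(2) in \<open>auto simp: pcat_def\<close>)
qed

lemma axis_path_pcat:
  assumes Y: "axis_path (Suc a) b p q F Y" and ab: "Suc a < b"
  shows "axis_path a b (\<lambda>c. if c = a then 0 else (1 + p c) / 2) (\<lambda>c. if c = a then 1/2 else (1 + q c) / 2)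
    (insert (1/2) ((\<lambda>x. (1 + x) / 2) ` F)) (pcat (axis a) Y)"
proof -
  let ?p = "\<lambda>c. if c = a then 0 else (1 + p c) / 2" and ?q = "\<lambda>c. if c = a then 1/2 else (1 + q c) / 2"
  have pq: "\<forall>c \<in> {Suc a..<b}. 0 \<le> p c \<and> p c < q c \<and> q c \<le> 1"
    and ordered: "\<forall>c \<in> {Suc a..<b}. \<forall>c' \<in> {Suc a..<b}. c < c' \<longrightarrow> q c \<le> p c'"
    and dY: "\<forall>s \<in> {0<..<1} - F. \<forall>c. ((\<lambda>r. Y r c) has_real_derivative axis_speed (Suc a) b p q c s) (at s)"
    and "finite F" "\<forall>c. Y 0 c = 0" "\<forall>c. Y 1 c = (if Suc a \<le> c \<and> c < b then 1 else 0)"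
    using Y unfolding axis_path_def by auto
  have "((\<lambda>r. pcat (axis a) Y r c) has_real_derivative axis_speed a b ?p ?q c s) (at s)"
    if s: "s \<in> {0<..<1} - insert (1/2) ((\<lambda>x. (1 + x) / 2) ` F)" for s c
  proof (cases "s < 1/2")
    case True
    have "((\<lambda>r. axis a r c) has_real_derivative (if c = a then 1 else 0)) (at (2 * s))"
      unfolding axis_def by (cases "c = a") (simp_all add: DERIV_ident)
    from has_real_derivative_pcat_left[where X = "axis a" and Y = Y and c = c and s = s, OF this True]
    have "((\<lambda>r. pcat (axis a) Y r c) has_real_derivative (if c = a then 1 else 0) * 2) (at s)" .
    moreover have "axis_speed a b ?p ?q c s = (if c = a then 1 else 0) * 2"
    proof (cases "a < c \<and> c < b")
      case in_range: True
      then have "0 \<le> p c" using pq by auto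
      then show ?thesis using True in_range by (auto simp: axis_speed_def)
    qed (use True s ab in \<open>auto simp: axis_speed_def\<close>)
    ultimately show ?thesis by simp
  next
    case False
    then have "2 * s - 1 \<in> {0<..<1} - F" using s by force
    then have "((\<lambda>r. Y r c) has_real_derivative axis_speed (Suc a) b p q c (2 * s - 1)) (at (2 * s - 1))"
      using dY by blast
    from has_real_derivative_pcat_right[where X = "axis a" and Y = Y and c = c and s = s, OF this] False s
    have "((\<lambda>r. pcat (axis a) Y r c) has_real_derivative axis_speed (Suc a) b p q c (2 * s - 1) * 2) (at s)"
      by auto
    moreover have "axis_speed a b ?p ?q c s = axis_speed (Suc a) b p q c (2 * s - 1) * 2"
      using False s by (auto simp: axis_speed_def field_simps)
    ultimately show ?thesis by simp
  qed
  moreover have "\<forall>c \<in> {a..<b}. 0 \<le> ?p c \<and> ?p c < ?q c \<and> ?q c \<le> 1"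
    using pq by (auto simp: Suc_le_eq)
  moreover have "\<forall>c \<in> {a..<b}. \<forall>c' \<in> {a..<b}. c < c' \<longrightarrow> ?q c \<le> ?p c'"
    using pq ordered by (auto simp: Suc_le_eq)
  ultimately show ?thesis
    using \<open>finite F\<close> \<open>\<forall>c. Y 0 c = 0\<close> \<open>\<forall>c. Y 1 c = _\<close> ab
    unfolding axis_path_def by (auto simp: pcat_def axis_def)
qed

lemma axis_path_pconcat: "\<exists>p q F. axis_path a (a + Suc n) p q F (pconcat (map axis [a..<a + Suc n]))"
proof (induction n arbitrary: a)
  case 0
  then show ?case using axis_path_axis[of a] by auto
next
  case (Suc n)
  obtain p q F where "axis_path (Suc a) (a + Suc (Suc n)) p q F (pconcat (map axis [Suc a..<a + Suc (Suc n)]))"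
    using Suc.IH[of "Suc a"] by auto
  moreover have "pconcat (map axis [a..<a + Suc (Suc n)]) =
      pcat (axis a) (pconcat (map axis [Suc a..<a + Suc (Suc n)]))"
    by (simp add: upt_conv_Cons del: upt_Suc)
  ultimately show ?case using axis_path_pcat by fastforce
qed

lemma sig2_axis_path:
  assumes "axis_path a b p q F X"
  shows "sig2 m X = (1, vec m (\<lambda>i. if a \<le> Suc i \<and> Suc i < b then 1 else 0),
    mat m m (\<lambda>(i, j). (if a \<le> Suc i \<and> Suc i < b then 1 else 0) * (if a \<le> Suc j \<and> Suc j < b then 1 else 0)
      * order_weight i j))"
proof -
  have F: "finite F" and pq: "\<forall>c \<in> {a..<b}. 0 \<le> p c \<and> p c < q c \<and> q c \<le> 1"
    and ordered: "\<forall>c \<in> {a..<b}. \<forall>c' \<in> {a..<b}. c < c' \<longrightarrow> q c \<le> p c'"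
    and dX: "\<forall>s \<in> {0<..<1} - F. \<forall>c. ((\<lambda>r. X r c) has_real_derivative axis_speed a b p q c s) (at s)"
    and X0: "\<forall>c. X 0 c = 0" and X1: "\<forall>c. X 1 c = (if a \<le> c \<and> c < b then 1 else 0)"
    using assms unfolding axis_path_def by auto
  have vd: "vector_derivative (\<lambda>r. X r c) (at s) = axis_speed a b p q c s" if "s \<in> {0<..<1} - F" for s c
    using dX that by (auto intro!: vector_derivative_at simp: has_real_derivative_iff_has_vector_derivative[symmetric])
  have "integral simplex2 (\<lambda>(s, t). vector_derivative (\<lambda>r. X r c) (at s) * vector_derivative (\<lambda>r. X r c') (at t))
      = integral simplex2 (\<lambda>(s, t). axis_speed a b p q c s * axis_speed a b p q c' t)" for c c'
    by (rule integral_spike[OF negligible_fst_or_snd_mem[OF F]]) (auto simp: simplex2_def vd)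
  also have "\<dots> c c' = (if a \<le> c \<and> c < b then 1 else 0) * (if a \<le> c' \<and> c' < b then 1 else 0) * order_weight c c'"
    for c c' by (rule integral_unique[OF has_integral_axis_speed[OF pq ordered]])
  finally show ?thesis
    unfolding sig2_def simplex2_def[symmetric] using X0 X1 by (auto simp: order_weight_def intro!: eq_matI)
qed

section \<open>The barycenter of the block signatures\<close>

fun block_of :: "nat list \<Rightarrow> nat \<Rightarrow> nat" where
  "block_of [] i = 0"
| "block_of (k # \<beta>) i = (if i < k then 0 else Suc (block_of \<beta> (i - k)))"

lemma block_of_less_length: "i < sum_list \<alpha> \<Longrightarrow> block_of \<alpha> i < length \<alpha>"
  by (induction \<alpha> arbitrary: i) auto

lemma block_of_eq_iff:
  assumes "j < length \<alpha>"
  shows "block_of \<alpha> i = j \<longleftrightarrow> sum_list (take j \<alpha>) \<le> i \<and> i < sum_list (take j \<alpha>) + \<alpha> ! j"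
  using assms
proof (induction \<alpha> arbitrary: i j)
  case (Cons k \<beta>)
  show ?case
  proof (cases j)
    case (Suc j')
    show ?thesis
    proof (cases "i < k")
      case False
      have "j' < length \<beta>" using Cons.prems Suc by simp
      then have "block_of (k # \<beta>) i = j \<longleftrightarrow>
          sum_list (take j' \<beta>) \<le> i - k \<and> i - k < sum_list (take j' \<beta>) + \<beta> ! j'"
        using Cons.IH[of j' "i - k"] False Suc by simp
      also have "\<dots> \<longleftrightarrow> sum_list (take j (k # \<beta>)) \<le> i \<and> i < sum_list (take j (k # \<beta>)) + (k # \<beta>) ! j"
        using False Suc by auto
      finally show ?thesis .
    qed (use Suc in auto)
  qed auto
qed simp

lemma index_skew_blocks:
  "i < sum_list \<alpha> \<Longrightarrow> i' < sum_list \<alpha> \<Longrightarrow> skew_blocks \<alpha> $$ (i, i') =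
    (if block_of \<alpha> i = block_of \<alpha> i' then (if i < i' then 1 else if i' < i then -1 else 0) else 0)"
proof (induction \<alpha> arbitrary: i i')
  case (Cons k \<beta>)
  then show ?case
    using Cons.IH[of "i - k" "i' - k"] by (auto simp: index_dsum[of _ k _ "sum_list \<beta>"])
qed simp

definition block_ind :: "nat list \<Rightarrow> nat \<Rightarrow> nat \<Rightarrow> real" where
  "block_ind \<alpha> j i = (if block_of \<alpha> i = j then 1 else 0)"

lemma sum_block_ind: "i < sum_list \<alpha> \<Longrightarrow> (\<Sum>j<length \<alpha>. block_ind \<alpha> j i) = 1"
  using block_of_less_length[of i \<alpha>] unfolding block_ind_def by (simp add: eq_commute[of "block_of _ _"])

lemma sum_block_ind_mult:
  "i < sum_list \<alpha> \<Longrightarrow> (\<Sum>j<length \<alpha>. block_ind \<alpha> j i * block_ind \<alpha> j i') =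
    (if block_of \<alpha> i = block_of \<alpha> i' then 1 else 0)"
proof -
  assume i: "i < sum_list \<alpha>"
  have "(\<Sum>j<length \<alpha>. block_ind \<alpha> j i * block_ind \<alpha> j i') =
      (\<Sum>j<length \<alpha>. if j = block_of \<alpha> i then block_ind \<alpha> j i' else 0)"
    by (rule sum.cong) (auto simp: block_ind_def)
  also have "\<dots> = block_ind \<alpha> (block_of \<alpha> i) i'"
    using block_of_less_length[OF i] by (simp add: sum.delta')
  finally show ?thesis by (simp add: block_ind_def eq_commute)
qed

lemma sig2_Ax:
  assumes pos: "\<forall>a \<in> set \<alpha>. a > 0" and j: "j < length \<alpha>"
  shows "sig2 (sum_list \<alpha>) (Ax \<alpha> (Suc j)) = (1, vec (sum_list \<alpha>) (block_ind \<alpha> j),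
    mat (sum_list \<alpha>) (sum_list \<alpha>) (\<lambda>(i, i'). block_ind \<alpha> j i * block_ind \<alpha> j i' * order_weight i i'))"
proof -
  let ?s = "sum_list (take j \<alpha>)"
  obtain n where n: "\<alpha> ! j = Suc n" using pos j by (metis gr0_implies_Suc nth_mem)
  have Ax: "Ax \<alpha> (Suc j) = pconcat (map axis [Suc ?s..<Suc ?s + Suc n])"
    unfolding Ax_def Let_def using n by simp
  obtain p q F where "axis_path (Suc ?s) (Suc ?s + Suc n) p q F (Ax \<alpha> (Suc j))"
    unfolding Ax using axis_path_pconcat by blast
  note sig = sig2_axis_path[OF this, of "sum_list \<alpha>"]
  have ind: "(if Suc ?s \<le> Suc i \<and> Suc i < Suc ?s + Suc n then 1 else 0) = block_ind \<alpha> j i" for i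
    using block_of_eq_iff[OF j, of i] n unfolding block_ind_def by auto
  show ?thesis unfolding sig by (simp only: ind)
qed

lemma tlog_tinv_tmult:
  assumes w: "w \<in> carrier_vec m" and A: "A \<in> carrier_mat m m" and sym: "A + transpose_mat A = outer m w w"
    and v: "v \<in> carrier_vec m" and S: "S \<in> carrier_mat m m"
  shows "tlog m (tmult m (tinv m (1, w, A)) (1, v, S)) =
    (0, v - w, - A + outer m w w + S - outer m w v - (1/2) \<cdot>\<^sub>m outer m (v - w) (v - w))"
proof -
  have "- w + v = v - w" using w v by auto
  moreover have "- A + outer m w w + S + outer m (- w) v = - A + outer m w w + S - outer m w v"
    using w A v S by (auto intro!: eq_matI)
  ultimately have "tmult m (tinv m (1, w, A)) (1, v, S) = (1, v - w, - A + outer m w w + S - outer m w v)"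
    unfolding tinv_eq[OF w A sym] using w A v S by (simp add: tmult_unipotent)
  moreover have "- A + outer m w w + S - outer m w v \<in> carrier_mat m m" by (simp add: minus_carrier_mat)
  ultimately show ?thesis using tlog_eq[of "v - w" m] w v by simp
qed

lemma sum_block_ind_tlog_entry:
  assumes i: "i < sum_list \<alpha>" and i': "i' < sum_list \<alpha>"
  shows "(\<Sum>j<length \<alpha>. - a + x * y + block_ind \<alpha> j i * block_ind \<alpha> j i' * order_weight i i'
      - x * block_ind \<alpha> j i' - (block_ind \<alpha> j i - x) * (block_ind \<alpha> j i' - y) / 2)
    = real (length \<alpha>) * (- a + x * y / 2) + skew_blocks \<alpha> $$ (i, i') / 2 + (y - x) / 2"
proof -
  have "(\<Sum>j<length \<alpha>. - a + x * y + block_ind \<alpha> j i * block_ind \<alpha> j i' * order_weight i i'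
      - x * block_ind \<alpha> j i' - (block_ind \<alpha> j i - x) * (block_ind \<alpha> j i' - y) / 2)
    = (\<Sum>j<length \<alpha>. (- a + x * y / 2) + block_ind \<alpha> j i * block_ind \<alpha> j i' * (order_weight i i' - 1/2)
      + y / 2 * block_ind \<alpha> j i - x / 2 * block_ind \<alpha> j i')"
    by (rule sum.cong) (auto simp: field_simps)
  also have "\<dots> = real (length \<alpha>) * (- a + x * y / 2)
      + (\<Sum>j<length \<alpha>. block_ind \<alpha> j i * block_ind \<alpha> j i') * (order_weight i i' - 1/2)
      + y / 2 * (\<Sum>j<length \<alpha>. block_ind \<alpha> j i) - x / 2 * (\<Sum>j<length \<alpha>. block_ind \<alpha> j i')"
    by (simp add: sum.distrib sum_subtractf sum_distrib_left sum_distrib_right)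
  also have "\<dots> = real (length \<alpha>) * (- a + x * y / 2) + skew_blocks \<alpha> $$ (i, i') / 2 + (y - x) / 2"
    using i i' by (auto simp: sum_block_ind sum_block_ind_mult index_skew_blocks order_weight_def)
  finally show ?thesis .
qed

lemma tsum_tlog_Ax:
  assumes pos: "\<forall>a \<in> set \<alpha>. a > 0" and m: "m = sum_list \<alpha>"
    and w: "w \<in> carrier_vec m" and A: "A \<in> carrier_mat m m" and sym: "A + transpose_mat A = outer m w w"
  shows "tsum m (map (\<lambda>x. tlog m (tmult m (tinv m (1, w, A)) x)) (map (\<lambda>i. sig2 m (Ax \<alpha> i)) [1..<length \<alpha> + 1]))
    = (0, vec m (\<lambda>i. 1 - real (length \<alpha>) * w $ i),
       mat m m (\<lambda>(i, i'). real (length \<alpha>) * (- A $$ (i, i') + w $ i * w $ i' / 2)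
         + skew_blocks \<alpha> $$ (i, i') / 2 + (w $ i' - w $ i) / 2))"
proof -
  let ?v = "\<lambda>j. vec m (block_ind \<alpha> j)"
  let ?S = "\<lambda>j. mat m m (\<lambda>(i, i'). block_ind \<alpha> j i * block_ind \<alpha> j i' * order_weight i i')"
  let ?t = "\<lambda>j. (0 :: real, ?v j - w,
    - A + outer m w w + ?S j - outer m w (?v j) - (1/2) \<cdot>\<^sub>m outer m (?v j - w) (?v j - w))"
  have "tlog m (tmult m (tinv m (1, w, A)) (sig2 m (Ax \<alpha> (Suc j)))) = ?t j" if "j < length \<alpha>" for j
    using sig2_Ax[OF pos that] tlog_tinv_tmult[OF w A sym, of "?v j" "?S j"] m by simp
  then have "map (\<lambda>x. tlog m (tmult m (tinv m (1, w, A)) x)) (map (\<lambda>i. sig2 m (Ax \<alpha> i)) [1..<length \<alpha> + 1])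
      = map ?t [0..<length \<alpha>]"
    by (simp add: map_Suc_upt[symmetric] del: upt_Suc)
  moreover have "tsum m (map ?t [0..<length \<alpha>]) = (0, vec m (\<lambda>i. \<Sum>j<length \<alpha>. (?v j - w) $ i),
      mat m m (\<lambda>ii'. \<Sum>j<length \<alpha>. snd (snd (?t j)) $$ ii'))"
    using w by (subst tsum_eq) (auto simp: sum_set_upt_conv_sum_list_nat[symmetric] atLeast0LessThan)
  moreover have "(\<Sum>j<length \<alpha>. (?v j - w) $ i) = 1 - real (length \<alpha>) * w $ i" if "i < m" for i
    using that w m by (simp add: sum_subtractf sum_block_ind)
  moreover have "(\<Sum>j<length \<alpha>. snd (snd (?t j)) $$ (i, i')) = real (length \<alpha>) * (- A $$ (i, i') + w $ i * w $ i' / 2)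
      + skew_blocks \<alpha> $$ (i, i') / 2 + (w $ i' - w $ i) / 2" if "i < m" "i' < m" for i i'
  proof -
    have "(\<Sum>j<length \<alpha>. snd (snd (?t j)) $$ (i, i')) = (\<Sum>j<length \<alpha>. - A $$ (i, i') + w $ i * w $ i'
        + block_ind \<alpha> j i * block_ind \<alpha> j i' * order_weight i i' - w $ i * block_ind \<alpha> j i'
        - (block_ind \<alpha> j i - w $ i) * (block_ind \<alpha> j i' - w $ i') / 2)"
      by (rule sum.cong) (use that w A in \<open>simp_all add: field_simps\<close>)
    then show ?thesis using sum_block_ind_tlog_entry that m by simp
  qed
  ultimately show ?thesis by (auto intro!: eq_vecI eq_matI)
qed

lemma skew_blocks_antisym:
  "i < sum_list \<alpha> \<Longrightarrow> i' < sum_list \<alpha> \<Longrightarrow> skew_blocks \<alpha> $$ (i', i) = - skew_blocks \<alpha> $$ (i, i')"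
  by (auto simp: index_skew_blocks)

lemma index_scaled_model_form:
  assumes "N > 0" "i < sum_list \<alpha>" "i' < sum_list \<alpha>"
  shows "((1 / (2 * N)) \<cdot>\<^sub>m model_form (1 / sqrt N) \<alpha>) $$ (i, i') = (skew_blocks \<alpha> $$ (i, i') + 1 / N) / (2 * N)"
  using assms by (simp add: model_form_def const_vec_def field_simps)

lemma scaled_model_form_mem_tgroup:
  assumes N: "N > 0"
  shows "(1, const_vec (sum_list \<alpha>) (1 / N), (1 / (2 * N)) \<cdot>\<^sub>m model_form (1 / sqrt N) \<alpha>) \<in> tgroup (sum_list \<alpha>)"
proof -
  let ?m = "sum_list \<alpha>" and ?w = "const_vec (sum_list \<alpha>) (1 / N)"
    and ?A = "(1 / (2 * N)) \<cdot>\<^sub>m model_form (1 / sqrt N) \<alpha>"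
  have "?A + transpose_mat ?A = outer ?m ?w ?w"
  proof (rule eq_matI)
    fix i i' assume "i < dim_row (outer ?m ?w ?w)" "i' < dim_col (outer ?m ?w ?w)"
    then have i: "i < ?m" "i' < ?m" by simp_all
    then have "?A $$ (i, i') + ?A $$ (i', i) = 1 / N * (1 / N)"
      using N skew_blocks_antisym[of i \<alpha> i']
      unfolding index_scaled_model_form[OF N i] index_scaled_model_form[OF N i(2,1)]
      by (simp add: field_simps)
    then show "(?A + transpose_mat ?A) $$ (i, i') = outer ?m ?w ?w $$ (i, i')"
      using i by (simp add: const_vec_def)
  qed simp_all
  then show ?thesis unfolding mem_tgroup_iff by simp
qed

lemma bary_Ax:
  assumes pos: "\<forall>a \<in> set \<alpha>. a > 0" and ne: "\<alpha> \<noteq> []"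
  shows "bary (sum_list \<alpha>) (map (\<lambda>i. sig2 (sum_list \<alpha>) (Ax \<alpha> i)) [1..<length \<alpha> + 1]) =
    (1, const_vec (sum_list \<alpha>) (1 / length \<alpha>),
     (1 / (2 * length \<alpha>)) \<cdot>\<^sub>m model_form (1 / sqrt (length \<alpha>)) \<alpha>)"
proof -
  define m where "m = sum_list \<alpha>"
  define N where "N = real (length \<alpha>)"
  have N: "N > 0" using ne unfolding N_def by simp
  let ?w = "const_vec m (1 / N)" and ?A = "(1 / (2 * N)) \<cdot>\<^sub>m model_form (1 / sqrt N) \<alpha>"
  let ?sig = "map (\<lambda>i. sig2 m (Ax \<alpha> i)) [1..<length \<alpha> + 1]"
  have A_entry: "?A $$ (i, i') = (skew_blocks \<alpha> $$ (i, i') + 1 / N) / (2 * N)" if "i < m" "i' < m" for i i'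
    using index_scaled_model_form[OF N] that unfolding m_def by blast
  have log_sum: "tsum m (map (\<lambda>x. tlog m (tmult m (tinv m (1, w, B)) x)) ?sig) =
      (0, vec m (\<lambda>i. 1 - N * w $ i),
       mat m m (\<lambda>(i, i'). N * (- B $$ (i, i') + w $ i * w $ i' / 2) + skew_blocks \<alpha> $$ (i, i') / 2 + (w $ i' - w $ i) / 2))"
    if "(1, w, B) \<in> tgroup m" for w B
    using that tsum_tlog_Ax[OF pos m_def] unfolding N_def mem_tgroup_iff by auto
  have "bary m ?sig = (1, ?w, ?A)"
    unfolding bary_def
  proof (rule the_equality)
    have "(1, ?w, ?A) \<in> tgroup m" using scaled_model_form_mem_tgroup[OF N] unfolding m_def .
    then show "(1, ?w, ?A) \<in> tgroup m \<and> tsum m (map (\<lambda>x. tlog m (tmult m (tinv m (1, ?w, ?A)) x)) ?sig) = tzero m"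
      unfolding log_sum[OF \<open>(1, ?w, ?A) \<in> tgroup m\<close>] tzero_def using N
      by (auto simp: A_entry const_vec_def intro!: eq_vecI eq_matI; simp add: field_simps)
  next
    fix g assume g: "g \<in> tgroup m \<and> tsum m (map (\<lambda>x. tlog m (tmult m (tinv m g) x)) ?sig) = tzero m"
    then obtain v B where g_eq: "g = (1, v, B)" and v: "v \<in> carrier_vec m" and B: "B \<in> carrier_mat m m"
      unfolding mem_tgroup_iff by auto
    have zero: "vec m (\<lambda>i. 1 - N * v $ i) = 0\<^sub>v m"
      "mat m m (\<lambda>(i, i'). N * (- B $$ (i, i') + v $ i * v $ i' / 2) + skew_blocks \<alpha> $$ (i, i') / 2
         + (v $ i' - v $ i) / 2) = 0\<^sub>m m m"
      using g log_sum[of v B] unfolding g_eq tzero_def by auto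
    have v_entry: "v $ i = 1 / N" if "i < m" for i
      using arg_cong[OF zero(1), of "\<lambda>x. x $ i"] that N by (simp add: field_simps)
    have "v = ?w" by (rule eq_vecI) (use v v_entry in \<open>auto simp: const_vec_def\<close>)
    moreover have "B = ?A"
    proof (rule eq_matI)
      fix i i' assume "i < dim_row ?A" "i' < dim_col ?A"
      then have i: "i < m" "i' < m" by (simp_all add: m_def)
      then show "B $$ (i, i') = ?A $$ (i, i')"
        unfolding A_entry[OF i] using arg_cong[OF zero(2), of "\<lambda>M. M $$ (i, i')"] N v_entry[OF i(1)] v_entry[OF i(2)]
        by (simp add: field_simps)
    qed (use B in \<open>auto simp: m_def\<close>)
    ultimately show "g = (1, ?w, ?A)" using g_eq by simp
  qed
  then show ?thesis unfolding m_def N_def by simp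
qed

lemma W_eq:
  assumes "\<forall>a \<in> set \<alpha>. a > 0" "\<alpha> \<noteq> []"
  shows "W \<alpha> = (1 / (2 * length \<alpha>)) \<cdot>\<^sub>m model_form (1 / sqrt (length \<alpha>)) \<alpha>"
  unfolding W_def bary_Ax[OF assms] by simp

theorem proposition7p10:
  fixes m :: nat and \<alpha> :: "nat list"
  assumes "m \<ge> 1"
    and "\<forall>a \<in> set \<alpha>. a > 0"
    and "sum_list \<alpha> = m"
  shows "if (\<forall>a \<in> set \<alpha>. even a)
         then congruent (W \<alpha>) (dsum Gamma2 (dpow H2m ((m - 2) div 2)))
         else congruent (W \<alpha>) (dsum (1\<^sub>m 1) (dsum (dpow H2m ((m - nodd \<alpha>) div 2)) (0\<^sub>m (nodd \<alpha> - 1) (nodd \<alpha> - 1))))"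
proof -
  have ne: "\<alpha> \<noteq> []" using assms by auto
  define N where "N = real (length \<alpha>)"
  have N: "N > 0" using ne unfolding N_def by simp
  let ?M = "model_form (1 / sqrt N) \<alpha>"
  have "congruent ((1 / (2 * N)) \<cdot>\<^sub>m ?M) ((sqrt (2 * N) * sqrt (2 * N)) \<cdot>\<^sub>m ((1 / (2 * N)) \<cdot>\<^sub>m ?M))"
    using N by (intro congruent_smult[of _ m]) (auto simp: assms(3)[symmetric])
  also have "(sqrt (2 * N) * sqrt (2 * N)) \<cdot>\<^sub>m ((1 / (2 * N)) \<cdot>\<^sub>m ?M) = ?M"
    using N by (auto intro!: eq_matI)
  also have "congruent ?M (normal_form \<alpha>)"
    using assms(2) ne N by (intro congruent_model_form_normal_form) auto
  finally have "congruent (W \<alpha>) (normal_form \<alpha>)"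
    using W_eq[OF assms(2) ne] unfolding N_def by simp
  then show ?thesis by (simp only: normal_form_def assms(3) if_distrib[of "congruent (W \<alpha>)"])
qed

end
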